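(* Let $H\ge1$, $\varepsilon\in(0,0.1]$, $\delta\in(0,1]$. For any MHR distribution $F$ supported on $[1,H]$, Algorithm U executed with $\ell=1$, $r=H$, $\gamma=1/e$, error parameter $\varepsilon$ and failure parameter $\delta$ (and a sufficiently large absolute constant $C$) outputs a price $p^{\mathsf{Alg}}$ such that $$\Pr\big[\mathrm{Rev}(p^{\mathsf{Alg}})\ge(1-5\varepsilon)\,\mathrm{Rev}(p^{\mathsf{opt}})\big]\ge 1-\delta,$$ using a total of $\mathcal{O}\big(\tfrac{1}{\varepsilon^2}\log^4\tfrac{H}{\varepsilon}\log\tfrac1\delta\big)$ pricing queries.
   Context: Pricing query model: the buyer's value has unknown CDF $F(p)=\Pr[v<p]$; a query at price $p$ draws a fresh independent $v\sim F$ and reveals only $\mathbf 1\{v\ge p\}$. $q(p)=1-F(p)$, $\mathrm{Rev}(p)=p\,q(p)$, and $p^{\mathsf{opt}}\in\arg\max_p\mathrm{Rev}(p)$. $F$ (with density $f$) is MHR if the hazard rate $f(v)/(1-F(v))$ is nondecreasing on its support. Logarithms are natural. Algorithm U (input $\ell,r,\delta,\varepsilon,\gamma$; absolute constant $C$): Let $S_1=\{(1+\varepsilon)^k\ell: k\in\mathbb{N}_0,\ (1+\varepsilon)^k\ell\le r\}$, $S_{can}=\emptyset$, $i=1$, $\widetilde R=22\log^2(r/\ell)+44\log(r/\ell)\log(1/\varepsilon)+66\log(1/\varepsilon)$. While $|S_i|\ge 20$: let $\ell_i=\min S_i$, $r_i=\max S_i$, $a_i=\min\{p\in S_i: p>\ell_i+0.2(r_i-\ell_i)\}$,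 $b_i=\min\{p\in S_i:p>\ell_i+0.5(r_i-\ell_i)\}$. Post $b_i$ for $C\log(\widetilde R/\delta)\gamma^{-1}$ queries and let $\widehat q(b_i)$ be the empirical purchase fraction. If $\widehat q(b_i)<0.75\gamma$, set $S_{i+1}=S_i\cap[\ell_i,b_i]$, $i\leftarrow i+1$, continue. Otherwise add $a_i,b_i$ to $S_{can}$; for $p\in\{a_i,b_i\}$ post $p$ for $C\log(\widetilde R/\delta)\gamma^{-1}\varepsilon^{-2}$ queries and set $\widehat{\mathrm{Rev}}(p)=p\cdot$(empirical purchase fraction). If $(1+\varepsilon)\widehat{\mathrm{Rev}}(a_i)<(1-\varepsilon)\widehat{\mathrm{Rev}}(b_i)$ set $S_{i+1}=S_i\cap[a_i,r_i]$, else $S_{i+1}=S_i\cap[\ell_i,b_i]$; $i\leftarrow i+1$. After the loop, add every $p$ of the final set to $S_{can}$, estimate $\widehat{\mathrm{Rev}}(p)$ for each $p\in S_{can}$ with $C\log(\widetilde R/\delta)\gamma^{-1}\varepsilon^{-2}$ fresh queries, and output $p^{\mathsf{Alg}}=\arg\max_{p\in S_{can}}\widehat{\mathrm{Rev}}(p)$. *)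

theory Defs
  imports "HOL-Probability.Probability"
begin

definition sale_prob :: "real measure \<Rightarrow> real \<Rightarrow> real" where
  "sale_prob M p = measure M {v. p \<le> v}"

definition cdf_lt :: "real measure \<Rightarrow> real \<Rightarrow> real" where
  "cdf_lt M p = measure M {v. v < p}"

definition Rev :: "real measure \<Rightarrow> real \<Rightarrow> real" where
  "Rev M p = p * sale_prob M p"

definition MHR_on :: "real measure \<Rightarrow> (real \<Rightarrow> real) \<Rightarrow> real \<Rightarrow> bool" where
  "MHR_on M f H \<longleftrightarrow>
     prob_space M \<and> f \<in> borel_measurable borel \<and> (\<forall>v. 0 \<le> f v) \<and>
     M = density lborel f \<and> (\<forall>v. v \<notin> {1..H} \<longrightarrow> f v = 0) \<and>
     (\<forall>x y. 1 \<le> x \<longrightarrow> x \<le> y \<longrightarrow> y \<le> H \<longrightarrow> cdf_lt M y < 1 \<longrightarrow>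
        f x / (1 - cdf_lt M x) \<le> f y / (1 - cdf_lt M y))"

definition grid :: "real \<Rightarrow> real \<Rightarrow> real \<Rightarrow> real set" where
  "grid l r \<epsilon> = {(1 + \<epsilon>) ^ k * l | k::nat. (1 + \<epsilon>) ^ k * l \<le> r}"

definition Rtilde :: "real \<Rightarrow> real \<Rightarrow> real \<Rightarrow> real" where
  "Rtilde l r \<epsilon> = 22 * (ln (r / l))\<^sup>2 + 44 * ln (r / l) * ln (1 / \<epsilon>) + 66 * ln (1 / \<epsilon>)"

text \<open>State: (S_i, S_can, number of queries used so far).
  A query batch of n posts at price p yields the number of purchases, distributed
  as binomial_pmf n (q p) (sum of n independent purchase indicators).
  The fuel argument only bounds the number of iterations; it is set to card S_1,
  which is never reached unless the loop fails to shrink S_i.\<close>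
fun U_loop :: "(real \<Rightarrow> real) \<Rightarrow> real \<Rightarrow> real \<Rightarrow> nat \<Rightarrow> nat \<Rightarrow> nat \<Rightarrow>
    real set \<times> real set \<times> nat \<Rightarrow> (real set \<times> real set \<times> nat) pmf" where
  "U_loop q \<epsilon> \<gamma> n1 n2 0 st = return_pmf st"
| "U_loop q \<epsilon> \<gamma> n1 n2 (Suc fuel) (S, Sc, Q) =
    (if card S < 20 then return_pmf (S, Sc, Q) else
     (let l = Min S; r = Max S;
          a = Min {p \<in> S. p > l + 0.2 * (r - l)};
          b = Min {p \<in> S. p > l + 0.5 * (r - l)} in
      bind_pmf (binomial_pmf n1 (q b)) (\<lambda>k.
        if real k / real n1 < 0.75 * \<gamma>
        then U_loop q \<epsilon> \<gamma> n1 n2 fuel (S \<inter> {l..b}, Sc, Q + n1)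
        else bind_pmf (binomial_pmf n2 (q a)) (\<lambda>ka.
             bind_pmf (binomial_pmf n2 (q b)) (\<lambda>kb.
               (let Ra = a * (real ka / real n2); Rb = b * (real kb / real n2) in
                U_loop q \<epsilon> \<gamma> n1 n2 fuel
                  (if (1 + \<epsilon>) * Ra < (1 - \<epsilon>) * Rb then S \<inter> {a..r} else S \<inter> {l..b},
                   Sc \<union> {a, b}, Q + n1 + 2 * n2)))))))"

fun est_list :: "(real \<Rightarrow> real) \<Rightarrow> nat \<Rightarrow> real list \<Rightarrow> (real \<times> real) list pmf" where
  "est_list q n [] = return_pmf []"
| "est_list q n (p # ps) =
    bind_pmf (binomial_pmf n (q p)) (\<lambda>k.
    bind_pmf (est_list q n ps) (\<lambda>rest. return_pmf ((p, p * (real k / real n)) # rest)))"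

definition pick_argmax :: "(real \<times> real) list \<Rightarrow> real" where
  "pick_argmax L = Min {p. (p, Max (snd ` set L)) \<in> set L}"

text \<open>Algorithm U: returns the distribution of (output price, total number of queries).\<close>
definition AlgU :: "(real \<Rightarrow> real) \<Rightarrow> real \<Rightarrow> real \<Rightarrow> real \<Rightarrow> real \<Rightarrow> real \<Rightarrow> real \<Rightarrow>
    (real \<times> nat) pmf" where
  "AlgU q l r \<delta> \<epsilon> \<gamma> C =
    (let S1 = grid l r \<epsilon>;
         Rt = Rtilde l r \<epsilon>;
         n1 = nat \<lceil>C * ln (Rt / \<delta>) / \<gamma>\<rceil>;
         n2 = nat \<lceil>C * ln (Rt / \<delta>) / (\<gamma> * \<epsilon>\<^sup>2)\<rceil> in
     bind_pmf (U_loop q \<epsilon> \<gamma> n1 n2 (card S1) (S1, {}, 0)) (\<lambda>(S, Sc, Q).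
       (let Sc' = Sc \<union> S in
        bind_pmf (est_list q n2 (sorted_list_of_set Sc')) (\<lambda>L.
          return_pmf (pick_argmax L, Q + n2 * card Sc')))))"

end

theory Submission
  imports Defs
begin

text \<open>Since the hazard rate \<open>f / q\<close> is nondecreasing, \<open>ln \<circ> q\<close> is concave on the support, and hence so
  is \<open>ln \<circ> Rev = ln + ln \<circ> q\<close>. Two consequences drive the analysis. First, \<open>q popt \<ge> 1/e\<close>, so the
  coarse test (empirical purchase rate below \<open>0.75/e\<close>) only discards prices above \<open>popt\<close>. Second,
  when the fine estimates at the probes \<open>a < b\<close> favour \<open>b\<close>, then \<open>a \<le> popt\<close>, because the revenue
  decreases beyond \<open>popt\<close>; when they favour \<open>a\<close> but \<open>popt > b\<close>, concavity of \<open>ln \<circ> Rev\<close> extrapolates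
  the small estimated gain from \<open>a\<close> to \<open>b\<close> into \<open>Rev b \<ge> (1 - 4.9 \<epsilon>) Rev popt\<close>. So every round keeps
  the invariant: some candidate is near-optimal, or \<open>popt\<close> is bracketed by the current interval up
  to a factor \<open>1 + \<epsilon>\<close>. Each round shrinks the width of the interval by the factor \<open>0.8\<close>, so there
  are \<open>O(log (H/\<epsilon>))\<close> rounds. By Hoeffding's inequality every sample is accurate with probability
  \<open>1 - 2 (\<delta>/R)\<^sup>3\<close> with \<open>R = Rtilde 1 H \<epsilon>\<close>, and a union bound over the rounds and the
  final estimates, together with the loss \<open>0.07 \<epsilon> Rev popt\<close> of choosing by estimated revenue,
  gives the theorem.\<close>

section \<open>Log-concavity of MHR survival functions\<close>

lemma power_mult_le_of_local_growth:
  fixes \<phi> :: "real \<Rightarrow> real"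
  assumes d: "0 \<le> d" "0 \<le> 1 + c * d"
    and step: "\<And>u. x \<le> u \<Longrightarrow> u + d \<le> y \<Longrightarrow> (1 + c * d) * \<phi> u \<le> \<phi> (u + d)"
  shows "x + real k * d \<le> y \<Longrightarrow> (1 + c * d) ^ k * \<phi> x \<le> \<phi> (x + real k * d)"
proof (induction k)
  case (Suc k)
  have "x + real k * d \<le> y"
    using Suc.prems d by (simp add: algebra_simps)
  then have "(1 + c * d) ^ Suc k * \<phi> x \<le> (1 + c * d) * \<phi> (x + real k * d)"
    using Suc.IH d by (simp add: mult.assoc mult_left_mono)
  also have "\<dots> \<le> \<phi> (x + real k * d + d)"
    using step[of "x + real k * d"] Suc.prems d by (simp add: algebra_simps)
  finally show ?case
    by (simp add: algebra_simps)
qed simp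

lemma exp_mult_le_of_local_growth:
  fixes \<phi> :: "real \<Rightarrow> real"
  assumes "x \<le> y"
    and step: "\<And>u v. x \<le> u \<Longrightarrow> u \<le> v \<Longrightarrow> v \<le> y \<Longrightarrow> (1 + c * (v - u)) * \<phi> u \<le> \<phi> v"
  shows "exp (c * (y - x)) * \<phi> x \<le> \<phi> y"
proof (rule LIMSEQ_le_const2)
  show "(\<lambda>n. (1 + c * (y - x) / real n) ^ n * \<phi> x) \<longlonglongrightarrow> exp (c * (y - x)) * \<phi> x"
    by (intro tendsto_mult_right tendsto_exp_limit_sequentially)
  obtain N :: nat where N: "\<bar>c * (y - x)\<bar> < real N"
    using reals_Archimedean2 by blast
  show "\<exists>N. \<forall>n\<ge>N. (1 + c * (y - x) / real n) ^ n * \<phi> x \<le> \<phi> y"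
  proof (intro exI allI impI)
    fix n assume n: "Suc N \<le> n"
    define d where "d = (y - x) / real n"
    have d: "0 \<le> d" "x + real n * d = y" "c * d = c * (y - x) / real n"
      using n \<open>x \<le> y\<close> by (auto simp: d_def)
    have "\<bar>c * (y - x)\<bar> / real n \<le> 1"
      using N n by (simp add: field_simps)
    moreover have "- (c * (y - x)) / real n \<le> \<bar>c * (y - x)\<bar> / real n"
      by (intro divide_right_mono) auto
    ultimately have "0 \<le> 1 + c * d"
      unfolding d(3) by simp
    moreover have "(1 + c * d) * \<phi> u \<le> \<phi> (u + d)" if "x \<le> u" "u + d \<le> y" for u
      using step[of u "u + d"] that d(1) by simp
    ultimately have "(1 + c * d) ^ n * \<phi> x \<le> \<phi> (x + real n * d)"
      using power_mult_le_of_local_growth[OF d(1)] d(2) by blast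
    then show "(1 + c * (y - x) / real n) ^ n * \<phi> x \<le> \<phi> y"
      using d by simp
  qed
qed

lemma concave_on_cong:
  assumes "\<And>x. x \<in> S \<Longrightarrow> f x = g x"
  shows "concave_on S f \<longleftrightarrow> concave_on S g"
  using assms unfolding concave_on_iff convex_def by (intro conj_cong refl) auto

lemma concave_on_chord_slopes:
  fixes f :: "real \<Rightarrow> real"
  assumes "concave_on {x..z} f" "x \<le> y" "y \<le> z"
  shows "(y - x) * (f z - f y) \<le> (z - y) * (f y - f x)"
proof (cases "x = z")
  case False
  then have "x < z" using assms by simp
  have "(f z - f x) / (z - x) * (y - x) + f x \<le> f y"
    using concave_onD_Icc'[OF assms(1), of y] assms by simp
  then have "(f z - f x) * (y - x) \<le> (f y - f x) * (z - x)"
    using \<open>x < z\<close> by (simp add: field_simps)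
  then show ?thesis by (simp add: algebra_simps)
qed (use assms in simp)

locale mhr_distribution =
  fixes M :: "real measure" and f :: "real \<Rightarrow> real" and H :: real
  assumes MHR: "MHR_on M f H"
begin

abbreviation q :: "real \<Rightarrow> real" where "q \<equiv> sale_prob M"

sublocale prob_space M
  using MHR unfolding MHR_on_def by auto

lemma M_eq_density: "M = density lborel f"
  using MHR unfolding MHR_on_def by auto

lemma borel_measurable_density[measurable]: "f \<in> borel_measurable borel"
  using MHR unfolding MHR_on_def by auto

lemma density_nonneg: "0 \<le> f v"
  using MHR unfolding MHR_on_def by auto

lemma density_outside: "v \<notin> {1..H} \<Longrightarrow> f v = 0"
  using MHR unfolding MHR_on_def by auto

lemma sets_M[simp]: "sets M = sets borel"
  by (subst M_eq_density) simp

lemma space_M[simp]: "space M = UNIV"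
  by (subst M_eq_density) simp

lemma emeasure_M: "A \<in> sets borel \<Longrightarrow> emeasure M A = (\<integral>\<^sup>+ x. ennreal (f x) * indicator A x \<partial>lborel)"
  by (subst M_eq_density) (rule emeasure_density, auto)

lemma cdf_lt_eq: "cdf_lt M x = 1 - q x"
proof -
  have "{v. v < x} = space M - {v. x \<le> v}" by auto
  then show ?thesis
    unfolding cdf_lt_def sale_prob_def using prob_compl[of "{v. x \<le> v}"] by simp
qed

lemma sale_prob_nonneg: "0 \<le> q x"
  unfolding sale_prob_def by simp

lemma sale_prob_le_1: "q x \<le> 1"
  unfolding sale_prob_def by simp

lemma sale_prob_antimono: "x \<le> y \<Longrightarrow> q y \<le> q x"
  unfolding sale_prob_def by (intro finite_measure_mono) auto

lemma sale_prob_diff: "x \<le> y \<Longrightarrow> q x - q y = measure M {x..<y}"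
proof -
  assume "x \<le> y"
  then have "{v. x \<le> v} = {x..<y} \<union> {v. y \<le> v}" by auto
  moreover have "measure M ({x..<y} \<union> {v. y \<le> v}) = measure M {x..<y} + measure M {v. y \<le> v}"
    by (intro finite_measure_Union) auto
  ultimately show ?thesis unfolding sale_prob_def by simp
qed

lemma sale_prob_diff_le:
  assumes "x \<le> y" "0 \<le> c" "\<And>v. x \<le> v \<Longrightarrow> v < y \<Longrightarrow> f v \<le> c"
  shows "q x - q y \<le> c * (y - x)"
proof -
  have "emeasure M {x..<y} = (\<integral>\<^sup>+ v. ennreal (f v) * indicator {x..<y} v \<partial>lborel)"
    by (rule emeasure_M) auto
  also have "\<dots> \<le> (\<integral>\<^sup>+ v. ennreal c * indicator {x..<y} v \<partial>lborel)"
    using assms by (intro nn_integral_mono) (auto simp: indicator_def intro!: ennreal_leI)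
  also have "\<dots> = ennreal (c * (y - x))"
    using assms by (subst nn_integral_cmult_indicator) (auto simp: ennreal_mult)
  finally show ?thesis
    using assms sale_prob_diff[of x y] by (simp add: emeasure_eq_measure)
qed

lemma sale_prob_diff_ge:
  assumes "x \<le> y" "0 \<le> c" "\<And>v. x \<le> v \<Longrightarrow> v < y \<Longrightarrow> c \<le> f v"
  shows "c * (y - x) \<le> q x - q y"
proof -
  have "ennreal (c * (y - x)) = (\<integral>\<^sup>+ v. ennreal c * indicator {x..<y} v \<partial>lborel)"
    using assms by (subst nn_integral_cmult_indicator) (auto simp: ennreal_mult)
  also have "\<dots> \<le> (\<integral>\<^sup>+ v. ennreal (f v) * indicator {x..<y} v \<partial>lborel)"
    using assms by (intro nn_integral_mono) (auto simp: indicator_def intro!: ennreal_leI)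
  also have "\<dots> = emeasure M {x..<y}"
    by (rule emeasure_M[symmetric]) auto
  finally show ?thesis
    using sale_prob_diff[OF assms(1)] by (simp add: emeasure_eq_measure)
qed

lemma sale_prob_below_1: "x \<le> 1 \<Longrightarrow> q x = 1"
proof -
  assume "x \<le> 1"
  then have "(\<lambda>v. ennreal (f v) * indicator {v. v < x} v) = (\<lambda>v. 0)"
    using density_outside by (auto simp: indicator_def fun_eq_iff)
  then have "emeasure M {v. v < x} = 0"
    by (subst emeasure_M) auto
  then show ?thesis
    using cdf_lt_eq[of x] sale_prob_le_1[of x] unfolding cdf_lt_def by (simp add: emeasure_eq_measure)
qed

lemma sale_prob_above_H: "H \<le> x \<Longrightarrow> q x = 0"
proof -
  assume "H \<le> x"
  then have "AE v in lborel. ennreal (f v) * indicator {v. x \<le> v} v = 0"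
    using density_outside by (intro eventually_mono[OF AE_lborel_singleton[of H]]) (auto simp: indicator_def)
  then have "emeasure M {v. x \<le> v} = 0"
    by (subst emeasure_M) (auto simp: nn_integral_0_iff_AE)
  then show ?thesis
    unfolding sale_prob_def by (simp add: emeasure_eq_measure)
qed

lemma less_H_of_sale_prob_pos: "0 < q y \<Longrightarrow> y < H"
  using sale_prob_above_H[of y] by force

definition hazard :: "real \<Rightarrow> real" where
  "hazard v = f v / q v"

lemma hazard_nonneg: "0 \<le> hazard v"
  unfolding hazard_def using density_nonneg sale_prob_nonneg by simp

lemma hazard_mono: "1 \<le> x \<Longrightarrow> x \<le> y \<Longrightarrow> 0 < q y \<Longrightarrow> hazard x \<le> hazard y"
proof -
  assume "1 \<le> x" "x \<le> y" "0 < q y"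
  moreover have "\<forall>x y. 1 \<le> x \<longrightarrow> x \<le> y \<longrightarrow> y \<le> H \<longrightarrow> cdf_lt M y < 1 \<longrightarrow>
      f x / (1 - cdf_lt M x) \<le> f y / (1 - cdf_lt M y)"
    using MHR unfolding MHR_on_def by blast
  ultimately show ?thesis
    using less_H_of_sale_prob_pos[of y] unfolding hazard_def cdf_lt_eq by simp
qed

lemma density_eq_hazard: "0 < q v \<Longrightarrow> f v = hazard v * q v"
  unfolding hazard_def by simp

lemma sale_prob_step_ge:
  assumes "1 \<le> u" "u \<le> v" "v \<le> w" "0 < q w"
  shows "(1 - hazard w * (v - u)) * q u \<le> q v"
proof -
  have "q u - q v \<le> hazard w * q u * (v - u)"
  proof (rule sale_prob_diff_le)
    fix t assume t: "u \<le> t" "t < v"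
    have qt: "0 < q t"
      using sale_prob_antimono[of t w] assms t by simp
    have "f t = hazard t * q t"
      using density_eq_hazard[OF qt] .
    also have "\<dots> \<le> hazard w * q u"
      using hazard_mono[of t w] sale_prob_antimono[of u t] assms t hazard_nonneg sale_prob_nonneg
      by (intro mult_mono) auto
    finally show "f t \<le> hazard w * q u" .
  qed (use assms hazard_nonneg sale_prob_nonneg in auto)
  then show ?thesis by (simp add: algebra_simps)
qed

lemma sale_prob_step_le:
  assumes "1 \<le> w" "w \<le> u" "u \<le> v" "0 < q v"
  shows "(1 + hazard w * (v - u)) * q v \<le> q u"
proof -
  have "hazard w * q v * (v - u) \<le> q u - q v"
  proof (rule sale_prob_diff_ge)
    fix t assume t: "u \<le> t" "t < v"
    have qt: "0 < q t"
      using sale_prob_antimono[of t v] assms t by simp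
    have "hazard w * q v \<le> hazard t * q t"
      using hazard_mono[of w t] sale_prob_antimono[of t v] assms t qt hazard_nonneg
      by (intro mult_mono) auto
    also have "\<dots> = f t"
      using density_eq_hazard[OF qt] by simp
    finally show "hazard w * q v \<le> f t" .
  qed (use assms hazard_nonneg sale_prob_nonneg in auto)
  then show ?thesis by (simp add: algebra_simps)
qed

lemma sale_prob_ge_exp_hazard_left:
  assumes "1 \<le> x" "x \<le> w" "0 < q w"
  shows "exp (- hazard w * (w - x)) * q x \<le> q w"
  using assms sale_prob_step_ge[of _ _ w]
  by (intro exp_mult_le_of_local_growth) auto

lemma sale_prob_ge_exp_hazard_right:
  assumes "1 \<le> w" "w \<le> z" "0 < q z"
  shows "exp (hazard w * (z - w)) * q z \<le> q w"
proof -
  have "exp (hazard w * (- w - - z)) * q (- (- z)) \<le> q (- (- w))"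
  proof (rule exp_mult_le_of_local_growth[where \<phi> = "\<lambda>t. q (- t)"])
    fix u v assume "- z \<le> u" "u \<le> v" "v \<le> - w"
    then show "(1 + hazard w * (v - u)) * q (- u) \<le> q (- v)"
      using sale_prob_step_le[of w "- v" "- u"] sale_prob_antimono[of "- u" z] assms by simp
  qed (use assms in simp)
  then show ?thesis by simp
qed

text \<open>The two exponential bounds say that \<open>ln \<circ> q\<close> lies below the line of slope \<open>- hazard w\<close>
  through \<open>(w, ln (q w))\<close>.\<close>
lemma concave_ln_sale_prob:
  assumes "0 < q y"
  shows "concave_on {1..y} (\<lambda>p. ln (q p))"
proof (rule concave_on_linorderI)
  fix t x z :: real
  assume t: "0 < t" "t < 1" and xz: "x \<in> {1..y}" "z \<in> {1..y}" "x < z"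
  define w where "w = (1 - t) * x + t * z"
  have "w - x = t * (z - x)" "z - w = (1 - t) * (z - x)"
    unfolding w_def by (simp_all add: algebra_simps)
  then have w: "x \<le> w" "w \<le> z"
    using t xz by (smt (verit) mult_nonneg_nonneg)+
  have qz: "0 < q z" and qw: "0 < q w" and qx: "0 < q x"
    using sale_prob_antimono assms xz w by (meson atLeastAtMost_iff less_le_trans order.trans)+
  have "ln (exp (- hazard w * (w - x)) * q x) \<le> ln (q w)"
    using sale_prob_ge_exp_hazard_left[of x w] xz w qw qx by (subst ln_le_cancel_iff) auto
  then have left: "ln (q x) - hazard w * (w - x) \<le> ln (q w)"
    using qx by (simp add: ln_mult)
  have "ln (exp (hazard w * (z - w)) * q z) \<le> ln (q w)"
    using sale_prob_ge_exp_hazard_right[of w z] xz w qw qz by (subst ln_le_cancel_iff) auto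
  then have right: "ln (q z) + hazard w * (z - w) \<le> ln (q w)"
    using qz by (simp add: ln_mult)
  have "(1 - t) * (ln (q x) - hazard w * (w - x)) + t * (ln (q z) + hazard w * (z - w))
      \<le> (1 - t) * ln (q w) + t * ln (q w)"
    using left right t by (intro add_mono mult_left_mono) auto
  moreover have "(1 - t) * (ln (q x) - hazard w * (w - x)) + t * (ln (q z) + hazard w * (z - w))
      = (1 - t) * ln (q x) + t * ln (q z) + hazard w * (t * (z - w) - (1 - t) * (w - x))"
    by (simp add: algebra_simps)
  moreover have "t * (z - w) - (1 - t) * (w - x) = 0"
    unfolding w_def by (simp add: algebra_simps)
  ultimately show "(1 - t) * ln (q x) + t * ln (q z) \<le> ln (q ((1 - t) *\<^sub>R x + t *\<^sub>R z))"
    by (simp add: w_def algebra_simps)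
qed simp

lemma Rev_eq: "Rev M p = p * q p"
  unfolding Rev_def ..

lemma concave_ln_Rev:
  assumes "0 < q y"
  shows "concave_on {1..y} (\<lambda>p. ln (Rev M p))"
proof -
  have "concave_on {1..y} ln"
    using ln_concave unfolding concave_on_def by (rule convex_on_subset) auto
  then have "concave_on {1..y} (\<lambda>p. ln p + ln (q p))"
    using concave_ln_sale_prob[OF assms] by (rule concave_on_add)
  moreover have "concave_on {1..y} (\<lambda>p. ln p + ln (q p)) \<longleftrightarrow> concave_on {1..y} (\<lambda>p. ln (Rev M p))"
  proof (rule concave_on_cong)
    fix p assume "p \<in> {1..y}"
    then show "ln p + ln (q p) = ln (Rev M p)"
      using sale_prob_antimono[of p y] assms by (simp add: Rev_eq ln_mult)
  qed
  ultimately show ?thesis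
    by simp
qed

end

section \<open>The optimal price\<close>

lemma one_minus_mult_exp_gt_1:
  fixes \<kappa> :: real
  assumes "1 < \<kappa>"
  shows "\<exists>s. 0 < s \<and> s < 1 \<and> 1 < (1 - s) * exp (s * \<kappa>)"
proof -
  define s where "s = (\<kappa> - 1) / (2 * \<kappa>)"
  have s: "0 < s" "s < 1"
    using assms unfolding s_def by (auto simp: field_simps)
  have "1 + s * (\<kappa> - 1) / 2 = (1 - s) * (1 + s * \<kappa>)"
    using assms unfolding s_def by (simp add: field_simps power2_eq_square)
  moreover have "1 < 1 + s * (\<kappa> - 1) / 2"
    using s assms by simp
  moreover have "(1 - s) * (1 + s * \<kappa>) \<le> (1 - s) * exp (s * \<kappa>)"
    using s by (intro mult_left_mono) auto
  ultimately have "1 < (1 - s) * exp (s * \<kappa>)"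
    by linarith
  then show ?thesis
    using s by blast
qed

locale mhr_optimum = mhr_distribution +
  fixes popt :: real
  assumes Rev_le_opt: "\<And>p. Rev M p \<le> Rev M popt"
begin

lemma sale_prob_1: "q 1 = 1"
  by (simp add: sale_prob_below_1)

lemma Rev_opt_ge_1: "1 \<le> Rev M popt"
  using Rev_le_opt[of 1] by (simp add: Rev_eq sale_prob_1)

lemma popt_ge_1: "1 \<le> popt"
  using Rev_opt_ge_1 sale_prob_below_1[of popt] by (force simp: Rev_eq)

lemma sale_prob_popt_pos: "0 < q popt"
proof (rule ccontr)
  assume "\<not> 0 < q popt"
  then have "q popt = 0"
    using sale_prob_nonneg[of popt] by simp
  then show False
    using Rev_opt_ge_1 by (simp add: Rev_eq)
qed

lemma popt_less_H: "popt < H"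
  using less_H_of_sale_prob_pos sale_prob_popt_pos by simp

text \<open>If \<open>q popt = exp (- \<kappa>)\<close> with \<open>\<kappa> > 1\<close>, log-concavity of \<open>q\<close> between \<open>1\<close> and \<open>popt\<close> shows that
  lowering the price to \<open>s + (1 - s) * popt\<close> multiplies the sale probability by at least \<open>exp (s * \<kappa>)\<close>,
  which for small \<open>s\<close> outweighs the loss of the factor \<open>1 - s\<close> in the price.\<close>
lemma sale_prob_popt_ge: "exp (- 1) \<le> q popt"
proof (rule ccontr)
  define \<kappa> where "\<kappa> = - ln (q popt)"
  assume "\<not> exp (- 1) \<le> q popt"
  then have "ln (q popt) < ln (exp (- 1))"
    using sale_prob_popt_pos by (subst ln_less_cancel_iff) auto
  then have "1 < \<kappa>"
    unfolding \<kappa>_def by simp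
  then obtain s where s: "0 < s" "s < 1" "1 < (1 - s) * exp (s * \<kappa>)"
    using one_minus_mult_exp_gt_1 by blast
  define p where "p = (1 - (1 - s)) *\<^sub>R 1 + (1 - s) *\<^sub>R popt"
  have "0 \<le> (popt - 1) * (1 - s)" "0 \<le> (popt - 1) * s"
    using s popt_ge_1 by simp_all
  then have p: "1 \<le> p" "p \<le> popt" "(1 - s) * popt \<le> p"
    unfolding p_def using s by (simp_all add: algebra_simps)
  have qp_pos: "0 < q p"
    using sale_prob_antimono[OF p(2)] sale_prob_popt_pos by simp
  have "(1 - (1 - s)) * ln (q 1) + (1 - s) * ln (q popt) \<le> ln (q p)"
    unfolding p_def using s popt_ge_1
    by (intro concave_onD[OF concave_ln_sale_prob[OF sale_prob_popt_pos]]) auto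
  moreover have "ln (q popt * exp (s * \<kappa>)) = (1 - (1 - s)) * ln (q 1) + (1 - s) * ln (q popt)"
    using sale_prob_popt_pos by (simp add: ln_mult sale_prob_1 \<kappa>_def algebra_simps)
  ultimately have "ln (q popt * exp (s * \<kappa>)) \<le> ln (q p)"
    by simp
  then have qp: "q popt * exp (s * \<kappa>) \<le> q p"
    using sale_prob_popt_pos qp_pos by (subst (asm) ln_le_cancel_iff) auto
  have "Rev M popt = popt * q popt * 1"
    by (simp add: Rev_eq)
  also have "\<dots> < popt * q popt * ((1 - s) * exp (s * \<kappa>))"
    using s popt_ge_1 sale_prob_popt_pos by (intro mult_strict_left_mono) auto
  also have "\<dots> = ((1 - s) * popt) * (q popt * exp (s * \<kappa>))"
    by (simp add: algebra_simps)
  also have "\<dots> \<le> p * q p"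
    using p qp s popt_ge_1 sale_prob_popt_pos by (intro mult_mono) auto
  finally show False
    using Rev_le_opt[of p] by (simp add: Rev_eq)
qed

lemma Rev_antimono_above_popt:
  assumes "popt \<le> x" "x \<le> y"
  shows "Rev M y \<le> Rev M x"
proof (cases "q y = 0")
  case True
  then show ?thesis
    using assms popt_ge_1 sale_prob_nonneg[of x] by (simp add: Rev_eq)
next
  case False
  then have qy: "0 < q y"
    using sale_prob_nonneg[of y] by simp
  have pos: "0 < Rev M p" if "1 \<le> p" "p \<le> y" for p
    using that qy sale_prob_antimono[of p y] by (simp add: Rev_eq)
  have "concave_on {popt..y} (\<lambda>p. ln (Rev M p))"
    using concave_ln_Rev[OF qy] unfolding concave_on_def
    by (rule convex_on_subset) (use popt_ge_1 in auto)
  then have "min (ln (Rev M popt)) (ln (Rev M y)) \<le> ln (Rev M x)"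
    using assms by (intro concave_on_ge_min) auto
  moreover have "ln (Rev M y) \<le> ln (Rev M popt)"
    using Rev_le_opt[of y] pos[of y] assms popt_ge_1 by simp
  ultimately show ?thesis
    using pos[of x] pos[of y] assms popt_ge_1 by (simp add: min_def split: if_splits)
qed

lemma Rev_ge_of_bracket:
  assumes "1 \<le> p" "p \<le> popt" "popt < (1 + \<epsilon>) * p" "0 \<le> \<epsilon>" "\<epsilon> \<le> 1"
  shows "(1 - \<epsilon>) * Rev M popt \<le> Rev M p"
proof -
  have "Rev M popt \<le> ((1 + \<epsilon>) * p) * q p"
    unfolding Rev_eq using assms sale_prob_antimono[OF assms(2)] sale_prob_popt_pos popt_ge_1
    by (intro mult_mono) auto
  then have "(1 - \<epsilon>) * Rev M popt \<le> (1 - \<epsilon>) * ((1 + \<epsilon>) * Rev M p)"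
    using assms by (intro mult_left_mono) (auto simp: Rev_eq)
  also have "\<dots> = Rev M p - \<epsilon>\<^sup>2 * Rev M p"
    by (simp add: power2_eq_square algebra_simps)
  also have "\<dots> \<le> Rev M p"
    using assms sale_prob_nonneg[of p] by (simp add: Rev_eq)
  finally show ?thesis .
qed

end

section \<open>Comparing the revenue at two probes\<close>

lemma ln_one_minus_le:
  fixes x :: real
  assumes "0 \<le> x" "x < 1"
  shows "ln (1 - x) \<le> - x - x\<^sup>2 / 2"
proof -
  define g where "g t = ln (1 - t) + t + t\<^sup>2 / 2" for t :: real
  have "g x \<le> g 0"
  proof (rule DERIV_nonpos_imp_nonincreasing[OF assms(1)])
    fix t assume t: "0 \<le> t" "t \<le> x"
    then have "t < 1" using assms by simp
    then have "(g has_real_derivative (- (t * t) / (1 - t))) (at t)"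
      unfolding g_def by (auto intro!: derivative_eq_intros simp: power2_eq_square field_simps)
    moreover have "- (t * t) / (1 - t) \<le> 0"
      using t \<open>t < 1\<close> by simp
    ultimately show "\<exists>y. (g has_real_derivative y) (at t) \<and> y \<le> 0" by blast
  qed
  then show ?thesis unfolding g_def by simp
qed

lemma ln_one_plus_minus_ln_one_minus_le:
  fixes u :: real
  assumes "0 \<le> u" "u \<le> 1/10"
  shows "ln (1 + u) - ln (1 - u) \<le> 2 * u + 7/10 * u ^ 3"
proof -
  define g where "g t = ln (1 + t) - ln (1 - t) - 2 * t - 7/10 * t ^ 3" for t :: real
  have "g u \<le> g 0"
  proof (rule DERIV_nonpos_imp_nonincreasing[OF assms(1)])
    fix t assume t: "0 \<le> t" "t \<le> u"
    then have t1: "t \<le> 1/10" using assms by simp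
    have "t * t \<le> 1/10 * (1/10)"
      using t t1 by (intro mult_mono) auto
    then have tt: "t\<^sup>2 \<le> 1/100"
      by (simp add: power2_eq_square)
    have "(g has_real_derivative (t\<^sup>2 * (2 / (1 - t\<^sup>2) - 21/10))) (at t)"
      unfolding g_def using t t1 tt
      by (auto intro!: derivative_eq_intros simp: power2_eq_square field_simps)
    moreover have "2 / (1 - t\<^sup>2) \<le> 21/10"
      using tt by (simp add: field_simps)
    ultimately show "\<exists>y. (g has_real_derivative y) (at t) \<and> y \<le> 0"
      by (intro exI[of _ "t\<^sup>2 * (2 / (1 - t\<^sup>2) - 21/10)"]) (simp add: mult_nonneg_nonpos)
  qed
  then show ?thesis unfolding g_def by simp
qed

lemma exp_minus_one_bounds: "367/1000 < exp (- 1 :: real)" "exp (- 1 :: real) \<le> 1/2"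
proof -
  show "367/1000 < exp (- 1 :: real)"
    using e_less_272 by (simp add: exp_minus field_simps)
  have "2 \<le> exp (1 :: real)"
    using exp_ge_add_one_self[of 1] by simp
  then show "exp (- 1 :: real) \<le> 1/2"
    by (simp add: exp_minus field_simps)
qed

lemma ln_5_4_ge: "1/5 \<le> ln (5/4 :: real)"
  using ln_le_minus_one[of "4/5 :: real"] ln_inverse[of "5/4 :: real"] by simp

text \<open>The constant: \<open>ln ((1 + \<epsilon>) / (1 - \<epsilon>)) \<le> 2 * \<epsilon> + 0.7 * \<epsilon>^3\<close>, plus the relative errors
  \<open>(\<epsilon>/1000) / 0.18\<close> and \<open>(\<epsilon>/1000) / 0.17\<close> of the two estimates.\<close>
lemma ln_ratio_le_of_estimates:
  fixes \<epsilon> a b Qa Qb xa xb :: real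
  assumes e: "0 < \<epsilon>" "\<epsilon> \<le> 1/10" and ab: "1 \<le> a" "1 \<le> b"
    and Q: "18/100 \<le> Qa" "18/100 \<le> Qb"
    and xa: "\<bar>xa - Qa\<bar> \<le> \<epsilon> / 1000" and xb: "\<bar>xb - Qb\<bar> \<le> \<epsilon> / 1000"
    and cmp: "(1 - \<epsilon>) * (b * xb) \<le> (1 + \<epsilon>) * (a * xa)"
  shows "ln (b * Qb) - ln (a * Qa) \<le> \<epsilon> * (20116/10000 + 7/10 * \<epsilon>\<^sup>2)"
proof -
  define \<eta> where "\<eta> = \<epsilon> / 1000"
  have \<eta>: "0 < \<eta>" "\<eta> \<le> 1/10000"
    unfolding \<eta>_def using e by auto
  have "Qb - \<eta> \<le> xb" "xa \<le> Qa + \<eta>"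
    using xa xb unfolding \<eta>_def abs_le_iff by linarith+
  then have "(1 - \<epsilon>) * (b * (Qb - \<eta>)) \<le> (1 - \<epsilon>) * (b * xb)"
    using e ab by (intro mult_left_mono) auto
  also have "\<dots> \<le> (1 + \<epsilon>) * (a * xa)"
    by (rule cmp)
  also have "\<dots> \<le> (1 + \<epsilon>) * (a * (Qa + \<eta>))"
    using \<open>xa \<le> Qa + \<eta>\<close> e ab by (intro mult_left_mono) auto
  finally have "ln ((1 - \<epsilon>) * (b * (Qb - \<eta>))) \<le> ln ((1 + \<epsilon>) * (a * (Qa + \<eta>)))"
    using e ab Q \<eta> by simp
  then have lnc: "ln (1 - \<epsilon>) + ln b + ln (Qb - \<eta>) \<le> ln (1 + \<epsilon>) + ln a + ln (Qa + \<eta>)"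
    using e ab Q \<eta> by (simp add: ln_mult)
  have "ln ((Qa + \<eta>) / Qa) \<le> \<eta> / Qa"
    using ln_le_minus_one[of "(Qa + \<eta>) / Qa"] Q \<eta> by (simp add: field_simps)
  moreover have "\<eta> / Qa \<le> \<eta> / (18/100)"
    using Q \<eta> by (intro divide_left_mono) auto
  moreover have "ln ((Qa + \<eta>) / Qa) = ln (Qa + \<eta>) - ln Qa"
    using Q \<eta> by (intro ln_divide_pos) auto
  ultimately have ta: "ln (Qa + \<eta>) \<le> ln Qa + \<eta> / (18/100)"
    by linarith
  have "ln (Qb / (Qb - \<eta>)) \<le> \<eta> / (Qb - \<eta>)"
    using ln_le_minus_one[of "Qb / (Qb - \<eta>)"] Q \<eta> by (simp add: field_simps)
  moreover have "\<eta> / (Qb - \<eta>) \<le> \<eta> / (17/100)"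
    using Q \<eta> by (intro divide_left_mono) auto
  moreover have "ln (Qb / (Qb - \<eta>)) = ln Qb - ln (Qb - \<eta>)"
    using Q \<eta> by (intro ln_divide_pos) auto
  ultimately have tb: "ln Qb - \<eta> / (17/100) \<le> ln (Qb - \<eta>)"
    by linarith
  have "ln (1 + \<epsilon>) - ln (1 - \<epsilon>) \<le> 2 * \<epsilon> + 7/10 * \<epsilon> ^ 3"
    using ln_one_plus_minus_ln_one_minus_le e by simp
  moreover have "\<eta> / (18/100) + \<eta> / (17/100) \<le> \<epsilon> * (116/10000)"
    unfolding \<eta>_def using e by simp
  moreover have "2 * \<epsilon> + 7/10 * \<epsilon> ^ 3 + \<epsilon> * (116/10000) = \<epsilon> * (20116/10000 + 7/10 * \<epsilon>\<^sup>2)"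
    by (simp add: power2_eq_square power3_eq_cube algebra_simps)
  ultimately show ?thesis
    using lnc ta tb ab Q by (simp add: ln_mult)
qed

lemma extrapolation_constants:
  fixes \<epsilon> :: real
  assumes "0 < \<epsilon>" "\<epsilon> \<le> 1/10"
  shows "(1/2 + 1/19 + \<epsilon>) * (\<epsilon> * (20116/10000 + 7/10 * \<epsilon>\<^sup>2))
         \<le> (3/10 - 1/19 - \<epsilon>/5) * (49/10 * \<epsilon> + (49/10 * \<epsilon>)\<^sup>2 / 2)"
proof -
  have "\<epsilon> * \<epsilon> \<le> 1/10 * (1/10)"
    using assms by (intro mult_mono) auto
  then have "\<epsilon>\<^sup>2 \<le> 1/100"
    by (simp add: power2_eq_square)
  then have "\<epsilon> * (20116/10000 + 7/10 * \<epsilon>\<^sup>2) \<le> \<epsilon> * (20186/10000)"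
    using assms by (intro mult_left_mono) auto
  then have "(1/2 + 1/19 + \<epsilon>) * (\<epsilon> * (20116/10000 + 7/10 * \<epsilon>\<^sup>2))
        \<le> (1/2 + 1/19 + \<epsilon>) * (\<epsilon> * (20186/10000))"
    using assms by (intro mult_left_mono) auto
  also have "\<dots> = \<epsilon> * ((1/2 + 1/19 + \<epsilon>) * (20186/10000))"
    by simp
  also have "\<dots> \<le> \<epsilon> * ((3/10 - 1/19 - \<epsilon>/5) * (49/10) + (3/10 - 1/19 - 2/100) * (2401/200 * \<epsilon>))"
    using assms by (intro mult_left_mono) (simp_all add: algebra_simps)
  also have "\<dots> \<le> \<epsilon> * ((3/10 - 1/19 - \<epsilon>/5) * (49/10) + (3/10 - 1/19 - \<epsilon>/5) * (2401/200 * \<epsilon>))"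
    using assms by (intro mult_left_mono add_left_mono mult_right_mono) auto
  also have "\<dots> = (3/10 - 1/19 - \<epsilon>/5) * (49/10 * \<epsilon> + (49/10 * \<epsilon>)\<^sup>2 / 2)"
    by (simp add: power2_eq_square algebra_simps)
  finally show ?thesis .
qed

lemma gap_le_of_chord_bound:
  fixes \<epsilon> D u v X :: real
  assumes e: "0 < \<epsilon>" "\<epsilon> \<le> 1/10" and D: "0 < D"
    and u: "0 \<le> u" "u \<le> (1/2 + 1/19 + \<epsilon>) * D" and v: "(3/10 - 1/19 - \<epsilon>/5) * D \<le> v"
    and chord: "v * X \<le> u * (\<epsilon> * (20116/10000 + 7/10 * \<epsilon>\<^sup>2))"
  shows "X \<le> 49/10 * \<epsilon> + (49/10 * \<epsilon>)\<^sup>2 / 2"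
proof (rule ccontr)
  define T where "T = \<epsilon> * (20116/10000 + 7/10 * \<epsilon>\<^sup>2)"
  define Y where "Y = 49/10 * \<epsilon> + (49/10 * \<epsilon>)\<^sup>2 / 2"
  assume "\<not> X \<le> 49/10 * \<epsilon> + (49/10 * \<epsilon>)\<^sup>2 / 2"
  then have XY: "Y < X" unfolding Y_def by simp
  have pos: "0 < 3/10 - 1/19 - \<epsilon>/5" "0 \<le> T" "0 \<le> Y"
    using e unfolding T_def Y_def by auto
  then have "0 < v"
    using v D by (smt (verit) mult_pos_pos)
  have "v * Y < v * X"
    using XY \<open>0 < v\<close> by simp
  also have "\<dots> \<le> ((1/2 + 1/19 + \<epsilon>) * D) * T"
    using chord u pos unfolding T_def by (smt (verit) mult_right_mono)
  also have "\<dots> \<le> D * ((3/10 - 1/19 - \<epsilon>/5) * Y)"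
    using extrapolation_constants[OF e] D unfolding T_def Y_def by (simp add: mult.assoc mult_left_mono)
  also have "\<dots> \<le> v * Y"
    using v pos by (simp add: mult.assoc[symmetric] mult.commute[of D] mult_right_mono)
  finally show False by simp
qed

context mhr_optimum
begin

text \<open>Moving right discards \<open>[l, a)\<close>; this is safe because beyond \<open>popt\<close> the revenue decreases,
  so an estimate of \<open>Rev b\<close> clearly above that of \<open>Rev a\<close> cannot occur when \<open>popt < a\<close>.\<close>
lemma popt_ge_of_move_right:
  fixes \<epsilon> a b xa xb :: real
  assumes e: "0 < \<epsilon>" "\<epsilon> \<le> 1/10" and ab: "1 \<le> a" "a < b" and qb: "18/100 \<le> q b"
    and xa: "\<bar>xa - q a\<bar> \<le> \<epsilon> / 1000" and xb: "\<bar>xb - q b\<bar> \<le> \<epsilon> / 1000"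
    and cmp: "(1 + \<epsilon>) * (a * xa) < (1 - \<epsilon>) * (b * xb)"
  shows "a \<le> popt"
proof (rule ccontr)
  define \<eta> where "\<eta> = \<epsilon> / 1000"
  assume "\<not> a \<le> popt"
  then have "Rev M b \<le> Rev M a"
    using Rev_antimono_above_popt[of a b] ab by simp
  have "q a - \<eta> \<le> xa" "xb \<le> q b + \<eta>"
    using xa xb unfolding \<eta>_def abs_le_iff by linarith+
  then have "(1 + \<epsilon>) * (a * (q a - \<eta>)) \<le> (1 + \<epsilon>) * (a * xa)"
    using e ab by (intro mult_left_mono) auto
  also have "\<dots> < (1 - \<epsilon>) * (b * xb)"
    by (rule cmp)
  also have "\<dots> \<le> (1 - \<epsilon>) * (b * (q b + \<eta>))"
    using \<open>xb \<le> q b + \<eta>\<close> e ab by (intro mult_left_mono) auto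
  finally have "(1 + \<epsilon>) * Rev M a - (1 + \<epsilon>) * (a * \<eta>) < (1 - \<epsilon>) * Rev M b + (1 - \<epsilon>) * (b * \<eta>)"
    by (simp add: Rev_eq algebra_simps)
  moreover have "(1 + \<epsilon>) * Rev M b \<le> (1 + \<epsilon>) * Rev M a"
    using \<open>Rev M b \<le> Rev M a\<close> e by simp
  moreover have "(1 + \<epsilon>) * (a * \<eta>) \<le> (1 + \<epsilon>) * (b * \<eta>)"
    using ab e unfolding \<eta>_def by simp
  moreover have "\<epsilon> * (18/100 * b) \<le> \<epsilon> * Rev M b"
    using qb ab e by (simp add: Rev_eq)
  ultimately have "\<epsilon> * (18/100 * b) < b * \<eta>"
    by (simp add: algebra_simps)
  then show False
    unfolding \<eta>_def using e ab by (simp add: field_simps)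
qed

text \<open>Moving left discards \<open>(b, r]\<close>; if \<open>popt\<close> lies there, the concavity of \<open>ln \<circ> Rev\<close>
  extrapolates the small estimated gain from \<open>a\<close> to \<open>b\<close> into a bound on the gain from \<open>b\<close> to \<open>popt\<close>,
  because \<open>popt - b\<close> is at most about twice \<open>b - a\<close>.\<close>
lemma Rev_ge_of_move_left:
  fixes \<epsilon> a b xa xb D :: real
  assumes e: "0 < \<epsilon>" "\<epsilon> \<le> 1/10" and ab: "1 \<le> a" "a < b" and pb: "b < popt"
    and D: "0 < D" "popt - b \<le> (1/2 + 1/19 + \<epsilon>) * D" "(3/10 - 1/19 - \<epsilon>/5) * D \<le> b - a"
    and qa: "18/100 \<le> q a" and qb: "18/100 \<le> q b"
    and xa: "\<bar>xa - q a\<bar> \<le> \<epsilon> / 1000" and xb: "\<bar>xb - q b\<bar> \<le> \<epsilon> / 1000"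
    and cmp: "(1 - \<epsilon>) * (b * xb) \<le> (1 + \<epsilon>) * (a * xa)"
  shows "(1 - 49/10 * \<epsilon>) * Rev M popt \<le> Rev M b"
proof -
  define x where "x = 49/10 * \<epsilon>"
  have x: "0 \<le> x" "x < 1"
    unfolding x_def using e by auto
  have "concave_on {a..popt} (\<lambda>p. ln (Rev M p))"
    using concave_ln_Rev[OF sale_prob_popt_pos] unfolding concave_on_def
    by (rule convex_on_subset) (use ab in auto)
  then have "(b - a) * (ln (Rev M popt) - ln (Rev M b)) \<le> (popt - b) * (ln (Rev M b) - ln (Rev M a))"
    using ab pb by (intro concave_on_chord_slopes) auto
  also have "\<dots> \<le> (popt - b) * (\<epsilon> * (20116/10000 + 7/10 * \<epsilon>\<^sup>2))"
    using ln_ratio_le_of_estimates[OF e _ _ qa qb xa xb cmp] ab pb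
    by (intro mult_left_mono) (auto simp: Rev_eq)
  finally have "ln (Rev M popt) - ln (Rev M b) \<le> x + x\<^sup>2 / 2"
    unfolding x_def using e D pb by (intro gap_le_of_chord_bound) auto
  then have "ln ((1 - x) * Rev M popt) \<le> ln (Rev M b)"
    using ln_one_minus_le[OF x] x Rev_opt_ge_1 by (simp add: ln_mult)
  moreover have "0 < Rev M b"
    using ab qb by (simp add: Rev_eq)
  ultimately have "(1 - x) * Rev M popt \<le> Rev M b"
    using x Rev_opt_ge_1 by (subst (asm) ln_le_cancel_iff) auto
  then show ?thesis
    unfolding x_def .
qed

end

section \<open>The geometric grid\<close>

locale geometric_grid =
  fixes \<epsilon> :: real
  assumes eps_pos: "0 < \<epsilon>" and eps_le: "\<epsilon> \<le> 1/10"
begin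

definition g :: "nat \<Rightarrow> real" where
  "g k = (1 + \<epsilon>) ^ k"

lemma g_ge_1: "1 \<le> g k"
  unfolding g_def using eps_pos by simp

lemma g_pos: "0 < g k"
  using g_ge_1 less_le_trans zero_less_one by blast

lemma g_Suc: "g (Suc k) = (1 + \<epsilon>) * g k"
  unfolding g_def by simp

lemma g_add: "g (i + d) = g i * (1 + \<epsilon>) ^ d"
  unfolding g_def by (simp add: power_add)

lemma g_less_iff [simp]: "g i < g j \<longleftrightarrow> i < j"
  unfolding g_def using eps_pos by simp

lemma g_le_iff [simp]: "g i \<le> g j \<longleftrightarrow> i \<le> j"
  unfolding g_def using eps_pos by simp

lemma inj_g: "inj g"
  by (intro injI) (metis g_le_iff order_antisym order_refl)

lemma mono_g: "mono g"
  unfolding mono_def by simp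

lemma card_g_image: "card (g ` {i..j}) = Suc j - i"
  using inj_g by (simp add: card_image inj_on_subset)

lemma Min_g_image: "i \<le> j \<Longrightarrow> Min (g ` {i..j}) = g i"
  by (intro Min_eqI) auto

lemma Max_g_image: "i \<le> j \<Longrightarrow> Max (g ` {i..j}) = g j"
  by (intro Max_eqI) auto

lemma g_image_Int_lower: "k \<le> j \<Longrightarrow> g ` {i..j} \<inter> {g i..g k} = g ` {i..k}"
  by auto

lemma g_image_Int_upper: "i \<le> k \<Longrightarrow> g ` {i..j} \<inter> {g k..g j} = g ` {k..j}"
  by auto

lemma g_diff_ge:
  assumes "i + 19 \<le> j"
  shows "19 * \<epsilon> * g i \<le> g j - g i"
proof -
  have "1 + real 19 * \<epsilon> \<le> (1 + \<epsilon>) ^ 19"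
    using eps_pos by (intro Bernoulli_inequality) auto
  also have "\<dots> \<le> (1 + \<epsilon>) ^ (j - i)"
    using assms eps_pos by (intro power_increasing) auto
  finally have "g i * (1 + 19 * \<epsilon>) \<le> g i * (1 + \<epsilon>) ^ (j - i)"
    using g_pos[of i] by simp
  also have "\<dots> = g j"
    using g_add[of i "j - i"] assms by simp
  finally show ?thesis
    by (simp add: algebra_simps)
qed

text \<open>Index of the smallest grid point in \<open>g ` {i..j}\<close> lying strictly to the right of the fraction \<open>\<theta>\<close>
  of the interval \<open>[g i, g j]\<close>; \<open>\<theta> = 0.2\<close> and \<open>\<theta> = 0.5\<close> give the probes \<open>a\<^sub>i\<close> and \<open>b\<^sub>i\<close> of the algorithm.\<close>
definition probe :: "real \<Rightarrow> nat \<Rightarrow> nat \<Rightarrow> nat" where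
  "probe \<theta> i j = Min {k \<in> {i..j}. g i + \<theta> * (g j - g i) < g k}"

lemma Min_g_image_greater:
  assumes "i \<le> j" "t < g j"
  shows "Min {p \<in> g ` {i..j}. t < p} = g (Min {k \<in> {i..j}. t < g k})"
proof -
  have "{p \<in> g ` {i..j}. t < p} = g ` {k \<in> {i..j}. t < g k}"
    by auto
  moreover have "finite {k \<in> {i..j}. t < g k}" "{k \<in> {i..j}. t < g k} \<noteq> {}"
    using assms by auto
  ultimately show ?thesis
    using mono_Min_commute[OF mono_g] by simp
qed

lemma probe:
  assumes "i < j" "0 \<le> \<theta>" "\<theta> < 1"
  defines "t \<equiv> g i + \<theta> * (g j - g i)"
  shows "i < probe \<theta> i j" "probe \<theta> i j \<le> j" "t < g (probe \<theta> i j)" "g (probe \<theta> i j) \<le> (1 + \<epsilon>) * t"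
proof -
  define K where "K = {k \<in> {i..j}. t < g k}"
  have "0 < g j - g i"
    using assms by simp
  then have "0 \<le> \<theta> * (g j - g i)" "\<theta> * (g j - g i) < 1 * (g j - g i)"
    using assms by (auto intro: mult_strict_right_mono)
  then have "g i \<le> t" "t < g j"
    unfolding t_def by auto
  then have "finite K" "j \<in> K"
    unfolding K_def using assms by auto
  then have k: "probe \<theta> i j \<in> K"
    unfolding probe_def K_def[symmetric] t_def[symmetric] by (intro Min_in) auto
  then show "probe \<theta> i j \<le> j" "t < g (probe \<theta> i j)"
    unfolding K_def by auto
  show ik: "i < probe \<theta> i j"
    using k \<open>g i \<le> t\<close> unfolding K_def by (auto simp: order.order_iff_strict)
  have "probe \<theta> i j - 1 \<notin> K"
    using Min_le[OF \<open>finite K\<close>, of "probe \<theta> i j - 1"] ik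
    unfolding probe_def K_def[symmetric] t_def[symmetric] by auto
  then have "g (probe \<theta> i j - 1) \<le> t"
    using ik k unfolding K_def by auto
  moreover have "g (probe \<theta> i j) = (1 + \<epsilon>) * g (probe \<theta> i j - 1)"
    using g_Suc[of "probe \<theta> i j - 1"] ik by simp
  ultimately show "g (probe \<theta> i j) \<le> (1 + \<epsilon>) * t"
    using eps_pos by simp
qed

lemma probe_geometry:
  assumes "i + 19 \<le> j"
  defines "l \<equiv> g i" and "r \<equiv> g j" and "a \<equiv> g (probe 0.2 i j)" and "b \<equiv> g (probe 0.5 i j)"
  shows "i < probe 0.2 i j" "probe 0.2 i j < probe 0.5 i j" "probe 0.5 i j < j"
    "b - l \<le> 0.8 * (r - l)" "r - a \<le> 0.8 * (r - l)"
    "(1 + \<epsilon>) * r - b \<le> (1/2 + 1/19 + \<epsilon>) * (r - l)"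
    "(3/10 - 1/19 - \<epsilon>/5) * (r - l) \<le> b - a"
proof -
  have ij: "i < j"
    using assms by simp
  have \<theta>: "0 \<le> (0.2::real)" "(0.2::real) < 1" "0 \<le> (0.5::real)" "(0.5::real) < 1"
    by simp_all
  define D where "D = r - l"
  have r: "r = l + D"
    unfolding D_def by simp
  note A = probe[OF ij \<theta>(1,2), folded l_def r_def a_def, folded D_def]
  note B = probe[OF ij \<theta>(3,4), folded l_def r_def b_def, folded D_def]
  have "0 < 19 * \<epsilon> * l"
    unfolding l_def using eps_pos g_pos by simp
  moreover have width: "19 * \<epsilon> * l \<le> D"
    unfolding D_def l_def r_def using g_diff_ge[OF assms(1)] .
  ultimately have D: "0 < D" and el: "\<epsilon> * l \<le> D / 19"
    by simp_all
  have eD: "\<epsilon> * D \<le> 0.1 * D"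
    using eps_le D by simp
  have eqs: "(1 + \<epsilon>) * (l + 0.2 * D) = l + 0.2 * D + \<epsilon> * l + 0.2 * (\<epsilon> * D)"
    "(1 + \<epsilon>) * (l + 0.5 * D) = l + 0.5 * D + \<epsilon> * l + 0.5 * (\<epsilon> * D)"
    "(1 + \<epsilon>) * r = l + D + \<epsilon> * l + \<epsilon> * D"
    "(1/2 + 1/19 + \<epsilon>) * D = D / 2 + D / 19 + \<epsilon> * D"
    "(3/10 - 1/19 - \<epsilon>/5) * D = 3/10 * D - D / 19 - (\<epsilon> * D) / 5"
    unfolding r by (simp_all add: field_simps)
  have a_le: "a \<le> l + 0.2 * D + D / 19 + D / 50"
    using A(4) eqs(1) el eD by linarith
  have b_le: "b \<le> l + 0.5 * D + D / 19 + D / 20"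
    using B(4) eqs(2) el eD by linarith
  show "i < probe 0.2 i j"
    using A by simp
  have "a < b"
    using a_le B(3) D by linarith
  then show "probe 0.2 i j < probe 0.5 i j"
    unfolding a_def b_def by simp
  have "b < r"
    using b_le D r by linarith
  then show "probe 0.5 i j < j"
    unfolding b_def r_def by simp
  have "b - l \<le> 0.8 * D" "r - a \<le> 0.8 * D"
    using a_le b_le A(3) D r by linarith+
  moreover have "(1 + \<epsilon>) * r - b \<le> (1/2 + 1/19 + \<epsilon>) * D"
    unfolding eqs(3,4) using B(3) el by linarith
  moreover have "(3/10 - 1/19 - \<epsilon>/5) * D \<le> b - a"
    unfolding eqs(5) using A(4) B(3) el eqs(1) by linarith
  ultimately show "b - l \<le> 0.8 * (r - l)" "r - a \<le> 0.8 * (r - l)"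
    "(1 + \<epsilon>) * r - b \<le> (1/2 + 1/19 + \<epsilon>) * (r - l)"
    "(3/10 - 1/19 - \<epsilon>/5) * (r - l) \<le> b - a"
    unfolding D_def by auto
qed

lemma grid_eq_g_image:
  assumes "1 \<le> H"
  obtains N where "grid 1 H \<epsilon> = g ` {0..N}" "g N \<le> H" "H < g (Suc N)"
proof -
  define K where "K = {k. g k \<le> H}"
  have "K \<subseteq> {..nat \<lceil>H / \<epsilon>\<rceil>}"
  proof
    fix k assume "k \<in> K"
    moreover have "1 + real k * \<epsilon> \<le> g k"
      unfolding g_def using eps_pos by (intro Bernoulli_inequality) auto
    ultimately have "real k \<le> H / \<epsilon>"
      using eps_pos unfolding K_def by (simp add: field_simps)
    also have "\<dots> \<le> real (nat \<lceil>H / \<epsilon>\<rceil>)"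
      by linarith
    finally show "k \<in> {..nat \<lceil>H / \<epsilon>\<rceil>}"
      by simp
  qed
  then have "finite K"
    by (rule finite_subset) auto
  moreover have "0 \<in> K"
    unfolding K_def g_def using assms by simp
  ultimately have "Max K \<in> K" "\<And>k. k \<in> K \<Longrightarrow> k \<le> Max K"
    using Max_in by auto
  moreover have "k \<in> K" if "k \<le> Max K" for k
  proof -
    have "g k \<le> g (Max K)"
      using that by simp
    then show ?thesis
      using \<open>Max K \<in> K\<close> unfolding K_def mem_Collect_eq by linarith
  qed
  ultimately have "K = {0..Max K}"
    by auto
  show ?thesis
  proof
    have "grid 1 H \<epsilon> = g ` K"
      unfolding grid_def K_def g_def by auto
    then show "grid 1 H \<epsilon> = g ` {0..Max K}"
      using \<open>K = {0..Max K}\<close> by simp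
    show "g (Max K) \<le> H"
      using \<open>Max K \<in> K\<close> unfolding K_def by simp
    have "Suc (Max K) \<notin> K"
      using \<open>finite K\<close> Max_ge not_less_eq_eq by blast
    then show "H < g (Suc (Max K))"
      unfolding K_def by simp
  qed
qed

text \<open>An upper bound on the number of rounds left on the grid interval \<open>g ` {i..j}\<close>: every round
  shrinks the width \<open>g j - g i\<close> by the factor \<open>0.8\<close>, and an interval of at least 20 grid points
  has width at least \<open>19 * \<epsilon>\<close>.\<close>
definition potential :: "nat \<Rightarrow> nat \<Rightarrow> real" where
  "potential i j = (if Suc j - i < 20 then 0 else 1 + log (5/4) ((g j - g i) / (19 * \<epsilon>)))"

lemma potential_ge_1:
  assumes "i + 19 \<le> j"
  shows "1 \<le> potential i j"
proof -
  have "19 * \<epsilon> * 1 \<le> 19 * \<epsilon> * g i"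
    using g_ge_1 eps_pos by (intro mult_left_mono) auto
  then have "19 * \<epsilon> \<le> g j - g i"
    using g_diff_ge[OF assms] by linarith
  then have "1 \<le> (g j - g i) / (19 * \<epsilon>)"
    using eps_pos by (simp add: field_simps)
  then show ?thesis
    unfolding potential_def using assms by simp
qed

lemma potential_nonneg: "0 \<le> potential i j"
  using potential_ge_1[of i j] unfolding potential_def by (cases "Suc j - i < 20") auto

lemma potential_decrease:
  assumes ij: "i + 19 \<le> j" and ij': "i' \<le> j'" and width: "g j' - g i' \<le> 0.8 * (g j - g i)"
  shows "potential i' j' \<le> potential i j - 1"
proof (cases "Suc j' - i' < 20")
  case True
  then show ?thesis
    using potential_ge_1[OF ij] unfolding potential_def by simp
next
  case False
  then have pos: "0 < (g j' - g i') / (19 * \<epsilon>)"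
    using eps_pos by simp
  have "(g j' - g i') / (19 * \<epsilon>) \<le> (0.8 * (g j - g i)) / (19 * \<epsilon>)"
    using width eps_pos by (intro divide_right_mono) auto
  also have "\<dots> = (g j - g i) / (19 * \<epsilon>) / (5/4)"
    by simp
  finally have le: "(g j' - g i') / (19 * \<epsilon>) \<le> (g j - g i) / (19 * \<epsilon>) / (5/4)" .
  then have "log (5/4) ((g j' - g i') / (19 * \<epsilon>)) \<le> log (5/4) ((g j - g i) / (19 * \<epsilon>) / (5/4))"
    using pos by (subst log_le_cancel_iff) auto
  also have "\<dots> = log (5/4) ((g j - g i) / (19 * \<epsilon>)) - 1"
    using ij eps_pos by (subst log_divide_pos) auto
  finally have "log (5/4) ((g j' - g i') / (19 * \<epsilon>)) \<le> log (5/4) ((g j - g i) / (19 * \<epsilon>)) - 1" .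
  moreover have "\<not> Suc j - i < 20"
    using ij by arith
  ultimately show ?thesis
    unfolding potential_def using False by simp
qed

lemma probe_step:
  assumes "i + 19 \<le> j"
  shows "i \<le> probe 0.5 i j" "probe 0.5 i j \<le> j" "i \<le> probe 0.2 i j" "probe 0.2 i j \<le> j"
    "Suc (probe 0.5 i j) - i < Suc j - i" "Suc j - probe 0.2 i j < Suc j - i"
    "potential i (probe 0.5 i j) \<le> potential i j - 1" "potential (probe 0.2 i j) j \<le> potential i j - 1"
  using probe_geometry[OF assms] potential_decrease[OF assms] by auto

lemma potential_0_le:
  assumes "g N \<le> H"
  shows "potential 0 N \<le> 1 + 5 * ln (H / \<epsilon>)"
proof -
  have "\<epsilon> \<le> H"
    using assms g_ge_1[of N] eps_le by simp
  then have L: "0 \<le> ln (H / \<epsilon>)"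
    using eps_pos by simp
  show ?thesis
  proof (cases "Suc N < 20")
    case False
    define x where "x = (g N - g 0) / (19 * \<epsilon>)"
    have "0 < x"
      using False eps_pos unfolding x_def by simp
    moreover have "g N - g 0 \<le> 19 * H"
      using assms g_pos[of 0] \<open>\<epsilon> \<le> H\<close> eps_pos by linarith
    then have "x \<le> 19 * H / (19 * \<epsilon>)"
      unfolding x_def using eps_pos by (intro divide_right_mono) auto
    then have "x \<le> H / \<epsilon>"
      by simp
    ultimately have lnx: "ln x \<le> ln (H / \<epsilon>)"
      by simp
    have "log (5/4) x \<le> 5 * ln (H / \<epsilon>)"
    proof (cases "ln x \<le> 0")
      case True
      then have "ln x / ln (5/4) \<le> 0"
        using ln_5_4_ge by (intro divide_nonpos_pos) auto
      then show ?thesis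
        using L unfolding log_def by simp
    next
      case False
      then have "ln x / ln (5/4) \<le> ln x / (1/5)"
        using ln_5_4_ge by (intro divide_left_mono) auto
      then show ?thesis
        using lnx unfolding log_def by simp
    qed
    then show ?thesis
      using False unfolding potential_def x_def by simp
  qed (use L in \<open>simp add: potential_def\<close>)
qed

lemma exists_g_bracket:
  assumes "g i \<le> x" "x < (1 + \<epsilon>) * g j"
  obtains k where "i \<le> k" "k \<le> j" "g k \<le> x" "x < (1 + \<epsilon>) * g k"
proof -
  define K where "K = {k \<in> {i..j}. g k \<le> x}"
  have "i \<le> j"
  proof (rule ccontr)
    assume "\<not> i \<le> j"
    then have "g (Suc j) \<le> g i"
      by simp
    then show False
      using assms unfolding g_Suc by linarith
  qed
  then have "finite K" "i \<in> K"
    unfolding K_def using assms by auto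
  then have k: "Max K \<in> K" "\<And>k. k \<in> K \<Longrightarrow> k \<le> Max K"
    by (auto intro: Max_in Max_ge)
  have "x < (1 + \<epsilon>) * g (Max K)"
  proof (cases "Max K = j")
    case False
    then have "Suc (Max K) \<in> {i..j}"
      using k(1) unfolding K_def by auto
    moreover have "Suc (Max K) \<notin> K"
      using k(2)[of "Suc (Max K)"] by auto
    ultimately have "x < g (Suc (Max K))"
      unfolding K_def by auto
    then show ?thesis
      unfolding g_Suc .
  qed (use assms in simp)
  then show ?thesis
    using that k(1) unfolding K_def by auto
qed

lemma one_plus_eps_pow_18: "(1 + \<epsilon>) ^ 18 \<le> 56/10"
proof -
  have "(1 + \<epsilon>) ^ 18 \<le> (11/10 :: real) ^ 18"
    using eps_pos eps_le by (intro power_mono) auto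
  also have "\<dots> = 11 ^ 18 / 10 ^ 18"
    by (simp only: power_divide)
  also have "\<dots> \<le> 56/10"
    by simp
  finally show ?thesis .
qed

end

section \<open>Sampling\<close>

lemma prob_bind_pmf_ge:
  fixes p :: "'a pmf" and f :: "'a \<Rightarrow> 'b pmf"
  assumes p: "1 - \<rho> \<le> measure_pmf.prob p {x. G x}"
    and f: "\<And>x. x \<in> set_pmf p \<Longrightarrow> G x \<Longrightarrow> 1 - \<beta> \<le> measure_pmf.prob (f x) E"
    and "0 \<le> \<beta>"
  shows "1 - \<rho> - \<beta> \<le> measure_pmf.prob (bind_pmf p f) E"
proof (cases "\<beta> \<le> 1")
  case True
  have "ennreal (1 - \<beta>) * emeasure p {x. G x} = (\<integral>\<^sup>+x. ennreal (1 - \<beta>) * indicator {x. G x} x \<partial>p)"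
    by (subst nn_integral_cmult_indicator) auto
  also have "\<dots> \<le> (\<integral>\<^sup>+x. emeasure (f x) E \<partial>p)"
    using f by (intro nn_integral_mono_AE AE_pmfI)
      (auto simp: indicator_def measure_pmf.emeasure_eq_measure intro!: ennreal_leI)
  also have "\<dots> = emeasure (bind_pmf p f) E"
    by simp
  finally have "ennreal ((1 - \<beta>) * measure_pmf.prob p {x. G x})
      \<le> ennreal (measure_pmf.prob (bind_pmf p f) E)"
    using True by (simp add: measure_pmf.emeasure_eq_measure ennreal_mult)
  then have "(1 - \<beta>) * measure_pmf.prob p {x. G x} \<le> measure_pmf.prob (bind_pmf p f) E"
    by (rule ennreal_le_iff[OF measure_nonneg, THEN iffD1])
  moreover have "(1 - \<beta>) * (1 - \<rho>) \<le> (1 - \<beta>) * measure_pmf.prob p {x. G x}"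
    using p True by (intro mult_left_mono) auto
  moreover have "0 \<le> \<rho>"
    using p measure_pmf.prob_le_1[of p "{x. G x}"] by linarith
  moreover have "1 - \<rho> - \<beta> \<le> (1 - \<beta>) * (1 - \<rho>)"
    using \<open>0 \<le> \<beta>\<close> \<open>0 \<le> \<rho>\<close> by (simp add: algebra_simps)
  ultimately show ?thesis
    by linarith
next
  case False
  then show ?thesis
    using p measure_pmf.prob_le_1[of p "{x. G x}"] measure_nonneg[of "measure_pmf (bind_pmf p f)" E]
    by linarith
qed

text \<open>Stated with \<open>1 - 0\<close> to match the shape of \<open>prob_bind_pmf_ge\<close> with \<open>\<beta> = 0\<close>.\<close>
lemma prob_return_pmf_ge: "P x \<Longrightarrow> 1 - 0 \<le> measure_pmf.prob (return_pmf x) {y. P y}"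
  by (simp add: indicator_def)

lemma binomial_pmf_concentration:
  assumes "0 < n" "0 \<le> p" "p \<le> 1" "0 \<le> t"
  shows "1 - 2 * exp (- 2 * real n * t\<^sup>2) \<le> measure_pmf.prob (binomial_pmf n p) {k. \<bar>real k / real n - p\<bar> \<le> t}"
proof -
  interpret binomial_distribution n p
    using assms by unfold_locales auto
  have "measure_pmf.prob (binomial_pmf n p) {k. \<bar>real k / real n - p\<bar> \<le> t}
      = 1 - measure_pmf.prob (binomial_pmf n p) {k. t < \<bar>real k / real n - p\<bar>}"
    by (subst measure_pmf.prob_compl[symmetric]) (auto intro: arg_cong[where f = "measure_pmf.prob _"])
  moreover have "measure_pmf.prob (binomial_pmf n p) {k. t < \<bar>real k / real n - p\<bar>}
      \<le> measure_pmf.prob (binomial_pmf n p) {k. t \<le> \<bar>real k / real n - p\<bar>}"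
    by (intro measure_pmf.finite_measure_mono) auto
  ultimately show ?thesis
    using prob_abs_ge'[OF assms(1,4)] by simp
qed

definition accurate_estimates :: "(real \<Rightarrow> real) \<Rightarrow> real \<Rightarrow> real list \<Rightarrow> (real \<times> real) list \<Rightarrow> bool" where
  "accurate_estimates q \<eta> ps L \<longleftrightarrow>
     map fst L = ps \<and> (\<forall>(p, e) \<in> set L. \<bar>e - p * q p\<bar> \<le> \<bar>p\<bar> * \<eta>)"

lemma est_list_accurate:
  assumes "\<And>p. p \<in> set ps \<Longrightarrow>
      1 - \<rho> \<le> measure_pmf.prob (binomial_pmf n (q p)) {k. \<bar>real k / real n - q p\<bar> \<le> \<eta>}"
  shows "1 - real (length ps) * \<rho> \<le> measure_pmf.prob (est_list q n ps) {L. accurate_estimates q \<eta> ps L}"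
  using assms
proof (induction ps)
  case (Cons p ps)
  have "1 - \<rho> \<le> measure_pmf.prob (binomial_pmf n (q p)) {k. \<bar>real k / real n - q p\<bar> \<le> \<eta>}"
    using Cons.prems by simp
  moreover have "measure_pmf.prob (binomial_pmf n (q p)) {k. \<bar>real k / real n - q p\<bar> \<le> \<eta>} \<le> 1"
    by (rule measure_pmf.prob_le_1)
  ultimately have "0 \<le> \<rho>"
    by linarith
  have "1 - \<rho> - real (length ps) * \<rho>
      \<le> measure_pmf.prob (est_list q n (p # ps)) {L. accurate_estimates q \<eta> (p # ps) L}"
    unfolding est_list.simps
  proof (rule prob_bind_pmf_ge[OF Cons.prems[OF list.set_intros(1)]])
    fix k assume k: "\<bar>real k / real n - q p\<bar> \<le> \<eta>"
    have "\<bar>p * (real k / real n) - p * q p\<bar> = \<bar>p\<bar> * \<bar>real k / real n - q p\<bar>"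
      unfolding right_diff_distrib[symmetric] abs_mult ..
    also have "\<dots> \<le> \<bar>p\<bar> * \<eta>"
      using k by (intro mult_left_mono) auto
    finally have est: "\<bar>p * (real k / real n) - p * q p\<bar> \<le> \<bar>p\<bar> * \<eta>" .
    have "1 - real (length ps) * \<rho> - 0 \<le> measure_pmf.prob
        (est_list q n ps \<bind> (\<lambda>rest. return_pmf ((p, p * (real k / real n)) # rest)))
        {L. accurate_estimates q \<eta> (p # ps) L}"
    proof (rule prob_bind_pmf_ge[where G = "accurate_estimates q \<eta> ps"])
      show "1 - real (length ps) * \<rho> \<le> measure_pmf.prob (est_list q n ps) {L. accurate_estimates q \<eta> ps L}"
        using Cons by simp
      fix L assume "accurate_estimates q \<eta> ps L"
      then show "1 - 0 \<le> measure_pmf.prob (return_pmf ((p, p * (real k / real n)) # L))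
          {L. accurate_estimates q \<eta> (p # ps) L}"
        using est by (intro prob_return_pmf_ge) (simp add: accurate_estimates_def)
    qed simp
    then show "1 - real (length ps) * \<rho> \<le> measure_pmf.prob
        (est_list q n ps \<bind> (\<lambda>rest. return_pmf ((p, p * (real k / real n)) # rest)))
        {L. accurate_estimates q \<eta> (p # ps) L}"
      by simp
  qed (use \<open>0 \<le> \<rho>\<close> in simp)
  then show ?case
    by (simp add: algebra_simps)
qed (simp add: accurate_estimates_def)

lemma pick_argmax_is_max:
  assumes "L \<noteq> []"
  obtains e where "(pick_argmax L, e) \<in> set L" "\<And>pe. pe \<in> set L \<Longrightarrow> snd pe \<le> e"
proof -
  define m where "m = Max (snd ` set L)"
  have "m \<in> snd ` set L"
    unfolding m_def using assms by (intro Max_in) auto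
  then have "{p. (p, m) \<in> set L} \<noteq> {}"
    by force
  moreover have "finite {p. (p, m) \<in> set L}"
    by (rule finite_subset[of _ "fst ` set L"]) force+
  ultimately have "pick_argmax L \<in> {p. (p, m) \<in> set L}"
    unfolding pick_argmax_def m_def[symmetric] by (rule Min_in[rotated])
  moreover have "\<And>pe. pe \<in> set L \<Longrightarrow> snd pe \<le> m"
    unfolding m_def by simp
  ultimately show ?thesis
    using that by blast
qed

text \<open>The shape of one round of Algorithm U: a coarse sample, then, unless the coarse test fails,
  two fine samples.\<close>
lemma prob_test_then_compare_ge:
  fixes p1 p2 p3 :: "nat pmf"
  assumes p1: "1 - \<rho> \<le> measure_pmf.prob p1 {k. G1 k}"
    and p2: "1 - \<rho> \<le> measure_pmf.prob p2 {k. G2 k}"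
    and p3: "1 - \<rho> \<le> measure_pmf.prob p3 {k. G3 k}"
    and "0 \<le> \<beta>"
    and A: "\<And>k. G1 k \<Longrightarrow> P k \<Longrightarrow> 1 - \<beta> \<le> measure_pmf.prob (A k) E"
    and B: "\<And>k ka kb. G1 k \<Longrightarrow> \<not> P k \<Longrightarrow> G2 ka \<Longrightarrow> G3 kb \<Longrightarrow> 1 - \<beta> \<le> measure_pmf.prob (B ka kb) E"
  shows "1 - 3 * \<rho> - \<beta> \<le>
    measure_pmf.prob (p1 \<bind> (\<lambda>k. if P k then A k else p2 \<bind> (\<lambda>ka. p3 \<bind> (\<lambda>kb. B ka kb)))) E"
proof -
  have "0 \<le> \<rho>"
    using p1 measure_pmf.prob_le_1[of p1 "{k. G1 k}"] by linarith
  have "1 - \<rho> - (2 * \<rho> + \<beta>) \<le>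
      measure_pmf.prob (p1 \<bind> (\<lambda>k. if P k then A k else p2 \<bind> (\<lambda>ka. p3 \<bind> (\<lambda>kb. B ka kb)))) E"
  proof (rule prob_bind_pmf_ge[OF p1])
    fix k assume k: "G1 k"
    show "1 - (2 * \<rho> + \<beta>) \<le> measure_pmf.prob (if P k then A k else p2 \<bind> (\<lambda>ka. p3 \<bind> B ka)) E"
    proof (cases "P k")
      case True
      then show ?thesis
        using A[OF k True] \<open>0 \<le> \<rho>\<close> by simp
    next
      case False
      have "1 - \<rho> - (\<rho> + \<beta>) \<le> measure_pmf.prob (p2 \<bind> (\<lambda>ka. p3 \<bind> B ka)) E"
      proof (rule prob_bind_pmf_ge[OF p2])
        fix ka assume "G2 ka"
        have "1 - \<rho> - \<beta> \<le> measure_pmf.prob (p3 \<bind> B ka) E"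
          by (rule prob_bind_pmf_ge[OF p3 B[OF k False \<open>G2 ka\<close>]]) (use \<open>0 \<le> \<beta>\<close> in auto)
        then show "1 - (\<rho> + \<beta>) \<le> measure_pmf.prob (p3 \<bind> B ka) E"
          by simp
      qed (use \<open>0 \<le> \<rho>\<close> \<open>0 \<le> \<beta>\<close> in simp)
      then show ?thesis
        using False by (simp add: algebra_simps)
    qed
  qed (use \<open>0 \<le> \<rho>\<close> \<open>0 \<le> \<beta>\<close> in simp)
  then show ?thesis
    by (simp add: algebra_simps)
qed

lemma pick_argmax_accurate:
  assumes L: "accurate_estimates q \<eta> ps L" and ps: "\<And>y. y \<in> set ps \<Longrightarrow> 0 \<le> y \<and> y \<le> B"
    and y0: "y0 \<in> set ps" and "0 \<le> \<eta>"
  shows "y0 * q y0 - 2 * B * \<eta> \<le> pick_argmax L * q (pick_argmax L)"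
proof -
  define p where "p = pick_argmax L"
  have setL: "set ps = fst ` set L"
    using L unfolding accurate_estimates_def by (metis list.set_map)
  have acc: "\<And>p e. (p, e) \<in> set L \<Longrightarrow> \<bar>e - p * q p\<bar> \<le> \<bar>p\<bar> * \<eta>"
    using L unfolding accurate_estimates_def by blast
  obtain e0 where e0: "(y0, e0) \<in> set L"
    using y0 unfolding setL by auto
  then have "L \<noteq> []"
    by auto
  then obtain e where e: "(p, e) \<in> set L" and emax: "\<And>pe. pe \<in> set L \<Longrightarrow> snd pe \<le> e"
    unfolding p_def using pick_argmax_is_max by blast
  have "p \<in> set ps"
    unfolding setL using e by (rule image_eqI[rotated]) simp
  then have p: "0 \<le> p" "p \<le> B"
    using ps by simp_all
  have "\<bar>e - p * q p\<bar> \<le> p * \<eta>" "\<bar>e0 - y0 * q y0\<bar> \<le> y0 * \<eta>"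
    using acc[OF e] acc[OF e0] p ps[OF y0] by simp_all
  moreover have "p * \<eta> \<le> B * \<eta>" "y0 * \<eta> \<le> B * \<eta>"
    using p ps[OF y0] \<open>0 \<le> \<eta>\<close> by (simp_all add: mult_right_mono)
  moreover have "e0 \<le> e"
    using emax[OF e0] by simp
  ultimately show ?thesis
    unfolding p_def[symmetric] abs_le_iff by linarith
qed

section \<open>The search loop\<close>

lemma coarse_test_passed:
  fixes x Q :: real
  assumes "\<bar>x - Q\<bar> \<le> 1/12" "\<not> x < 0.75 * exp (- 1)"
  shows "18/100 \<le> Q"
  using assms exp_minus_one_bounds(1) unfolding abs_le_iff by (simp add: power2_eq_square)

lemma coarse_test_failed:
  fixes x Q :: real
  assumes "\<bar>x - Q\<bar> \<le> 1/12" "x < 0.75 * exp (- 1)"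
  shows "Q < exp (- 1)"
  using assms exp_minus_one_bounds(1) unfolding abs_le_iff by (simp add: power2_eq_square)

locale algorithm_U = mhr_optimum M f H popt + geometric_grid \<epsilon>
  for M :: "real measure" and f H popt \<epsilon> +
  fixes n1 n2 :: nat and \<rho> :: real
  assumes coarse_accuracy:
      "\<And>p. 1 - \<rho> \<le> measure_pmf.prob (binomial_pmf n1 (q p)) {k. \<bar>real k / real n1 - q p\<bar> \<le> 1/12}"
    and fine_accuracy:
      "\<And>p. 1 - \<rho> \<le> measure_pmf.prob (binomial_pmf n2 (q p)) {k. \<bar>real k / real n2 - q p\<bar> \<le> \<epsilon> / 1000}"
begin

lemma rho_nonneg: "0 \<le> \<rho>"
  using coarse_accuracy[of 1]
    measure_pmf.prob_le_1[of "binomial_pmf n1 (q 1)" "{k. \<bar>real k / real n1 - q 1\<bar> \<le> 1/12}"]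
  by linarith

definition loop :: "nat \<Rightarrow> real set \<times> real set \<times> nat \<Rightarrow> (real set \<times> real set \<times> nat) pmf" where
  "loop fuel st = U_loop q \<epsilon> (exp (- 1)) n1 n2 fuel st"

lemma loop_small:
  "Suc j - i < 20 \<Longrightarrow> loop (Suc fuel) (g ` {i..j}, Sc, Q) = return_pmf (g ` {i..j}, Sc, Q)"
  unfolding loop_def by (simp add: card_g_image)

lemma loop_step:
  assumes ij: "i + 19 \<le> j"
  defines "a \<equiv> g (probe 0.2 i j)" and "b \<equiv> g (probe 0.5 i j)"
  shows "loop (Suc fuel) (g ` {i..j}, Sc, Q) =
    binomial_pmf n1 (q b) \<bind> (\<lambda>k.
      if real k / real n1 < 0.75 * exp (- 1) then loop fuel (g ` {i..probe 0.5 i j}, Sc, Q + n1)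
      else binomial_pmf n2 (q a) \<bind> (\<lambda>ka. binomial_pmf n2 (q b) \<bind> (\<lambda>kb.
        loop fuel (if (1 + \<epsilon>) * (a * (real ka / real n2)) < (1 - \<epsilon>) * (b * (real kb / real n2))
                   then g ` {probe 0.2 i j..j} else g ` {i..probe 0.5 i j},
                   Sc \<union> {a, b}, Q + n1 + 2 * n2))))"
proof -
  note G = probe_geometry[OF ij]
  have "i \<le> j" "g i < g j"
    using ij by simp_all
  then have "g i + 0.2 * (g j - g i) < g j" "g i + 0.5 * (g j - g i) < g j"
    by (simp_all add: field_simps)
  then have "Min {p \<in> g ` {i..j}. p > g i + 0.2 * (g j - g i)} = a"
    "Min {p \<in> g ` {i..j}. p > g i + 0.5 * (g j - g i)} = b"
    unfolding a_def b_def probe_def using Min_g_image_greater \<open>i \<le> j\<close> by auto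
  moreover have "\<not> card (g ` {i..j}) < 20"
    using ij by (simp add: card_g_image)
  moreover have "g ` {i..j} \<inter> {g i..b} = g ` {i..probe 0.5 i j}"
    "g ` {i..j} \<inter> {a..g j} = g ` {probe 0.2 i j..j}"
    unfolding a_def b_def using G by (auto intro: g_image_Int_lower g_image_Int_upper)
  ultimately show ?thesis
    unfolding loop_def U_loop.simps(2) Let_def Min_g_image[OF \<open>i \<le> j\<close>] Max_g_image[OF \<open>i \<le> j\<close>]
    by (simp only: if_False)
qed

lemma loop_step_cases [consumes 2, case_names low right left]:
  assumes "i + 19 \<le> j" "x \<in> set_pmf (loop (Suc fuel) (g ` {i..j}, Sc, Q))"
  defines "Sc' \<equiv> Sc \<union> {g (probe 0.2 i j), g (probe 0.5 i j)}"
  obtains "x \<in> set_pmf (loop fuel (g ` {i..probe 0.5 i j}, Sc, Q + n1))"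
    | "x \<in> set_pmf (loop fuel (g ` {probe 0.2 i j..j}, Sc', Q + n1 + 2 * n2))"
    | "x \<in> set_pmf (loop fuel (g ` {i..probe 0.5 i j}, Sc', Q + n1 + 2 * n2))"
  using assms(2) unfolding loop_step[OF assms(1)] Sc'_def by (auto split: if_splits)

definition within_budget :: "nat \<Rightarrow> nat \<Rightarrow> real set \<Rightarrow> nat \<Rightarrow> real set \<times> real set \<times> nat \<Rightarrow> bool" where
  "within_budget i j Sc Q = (\<lambda>(S', Sc', Q').
     (\<exists>i' j'. S' = g ` {i'..j'} \<and> Suc j' - i' < 20) \<and> finite Sc' \<and>
     real (card Sc') \<le> real (card Sc) + 2 * potential i j \<and>
     real Q' \<le> real Q + real (n1 + 2 * n2) * potential i j)"

lemma within_budget_step: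
  assumes "within_budget i' j' Sc' Q' x" "card Sc' \<le> card Sc + 2" "Q' \<le> Q + n1 + 2 * n2"
    and "potential i' j' \<le> potential i j - 1"
  shows "within_budget i j Sc Q x"
proof -
  have "real (n1 + 2 * n2) * potential i' j' \<le> real (n1 + 2 * n2) * (potential i j - 1)"
    using assms(4) by (intro mult_left_mono) auto
  then show ?thesis
    using assms unfolding within_budget_def by (auto simp: algebra_simps split: prod.splits)
qed

lemma loop_within_budget:
  "i \<le> j \<Longrightarrow> Suc j - i \<le> fuel \<Longrightarrow> finite Sc \<Longrightarrow> x \<in> set_pmf (loop fuel (g ` {i..j}, Sc, Q)) \<Longrightarrow>
   within_budget i j Sc Q x"
proof (induction fuel arbitrary: i j Sc Q)
  case (Suc fuel)
  show ?case
  proof (cases "Suc j - i < 20")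
    case True
    then have "x = (g ` {i..j}, Sc, Q)"
      using Suc.prems loop_small by simp
    then show ?thesis
      using True Suc.prems potential_nonneg[of i j] unfolding within_budget_def by auto
  next
    case False
    then have ij: "i + 19 \<le> j"
      by simp
    note P = probe_step[OF ij]
    define Sc' where "Sc' = Sc \<union> {g (probe 0.2 i j), g (probe 0.5 i j)}"
    have "card Sc' \<le> card Sc + card {g (probe 0.2 i j), g (probe 0.5 i j)}"
      unfolding Sc'_def by (rule card_Un_le)
    then have Sc': "finite Sc'" "card Sc' \<le> card Sc + 2"
      unfolding Sc'_def using Suc.prems by (auto simp: card_insert_if split: if_splits)
    from ij Suc.prems(4) show ?thesis
    proof (cases rule: loop_step_cases)
      case low
      have "within_budget i (probe 0.5 i j) Sc (Q + n1) x"
        by (rule Suc.IH) (use low P Suc.prems in auto)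
      then show ?thesis
        by (rule within_budget_step) (use P in auto)
    next
      case right
      have "within_budget (probe 0.2 i j) j Sc' (Q + n1 + 2 * n2) x"
        by (rule Suc.IH) (use right P Suc.prems Sc' in \<open>auto simp: Sc'_def\<close>)
      then show ?thesis
        by (rule within_budget_step) (use P Sc' in auto)
    next
      case left
      have "within_budget i (probe 0.5 i j) Sc' (Q + n1 + 2 * n2) x"
        by (rule Suc.IH) (use left P Suc.prems Sc' in \<open>auto simp: Sc'_def\<close>)
      then show ?thesis
        by (rule within_budget_step) (use P Sc' in auto)
    qed
  qed
qed simp

text \<open>The candidates passed the coarse test, so their sale probability is at
  least \<open>0.18\<close>; this bounds them by \<open>Rev M popt / 0.18\<close> and so keeps the additive errors of their
  revenue estimates proportional to \<open>Rev M popt\<close>.\<close>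
definition search_invariant :: "nat \<Rightarrow> nat \<Rightarrow> real set \<Rightarrow> bool" where
  "search_invariant i j Sc \<longleftrightarrow> 18/100 \<le> q (g i) \<and> finite Sc \<and> (\<forall>y\<in>Sc. 18/100 \<le> q y \<and> 1 \<le> y) \<and>
     ((\<exists>y\<in>Sc. (1 - 49/10 * \<epsilon>) * Rev M popt \<le> Rev M y) \<or> (g i \<le> popt \<and> popt < (1 + \<epsilon>) * g j))"

definition good_outcomes :: "(real set \<times> real set \<times> nat) set" where
  "good_outcomes = {(S, Sc, Q). \<exists>i j. S = g ` {i..j} \<and> i \<le> j \<and> Suc j - i < 20 \<and> search_invariant i j Sc}"

lemma search_invariant_move_low:
  assumes "search_invariant i j Sc" "\<bar>x - q (g (probe 0.5 i j))\<bar> \<le> 1/12" "x < 0.75 * exp (- 1)"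
  shows "search_invariant i (probe 0.5 i j) Sc"
proof -
  have "q (g (probe 0.5 i j)) < q popt"
    using coarse_test_failed[OF assms(2,3)] sale_prob_popt_ge by simp
  then have "popt < g (probe 0.5 i j)"
    using sale_prob_antimono[of "g (probe 0.5 i j)" popt] by force
  moreover have "g (probe 0.5 i j) \<le> (1 + \<epsilon>) * g (probe 0.5 i j)"
    using eps_pos g_pos[of "probe 0.5 i j"] by simp
  ultimately show ?thesis
    using assms(1) unfolding search_invariant_def by auto
qed

lemma search_invariant_compare:
  assumes ij: "i + 19 \<le> j" and inv: "search_invariant i j Sc"
    and coarse: "\<bar>x - q (g (probe 0.5 i j))\<bar> \<le> 1/12" "\<not> x < 0.75 * exp (- 1)"
    and xa: "\<bar>xa - q (g (probe 0.2 i j))\<bar> \<le> \<epsilon> / 1000" and xb: "\<bar>xb - q (g (probe 0.5 i j))\<bar> \<le> \<epsilon> / 1000"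
  defines "a \<equiv> g (probe 0.2 i j)" and "b \<equiv> g (probe 0.5 i j)"
  shows "(1 + \<epsilon>) * (a * xa) < (1 - \<epsilon>) * (b * xb) \<Longrightarrow> search_invariant (probe 0.2 i j) j (Sc \<union> {a, b})"
    and "\<not> (1 + \<epsilon>) * (a * xa) < (1 - \<epsilon>) * (b * xb) \<Longrightarrow> search_invariant i (probe 0.5 i j) (Sc \<union> {a, b})"
proof -
  note geom = probe_geometry[OF ij, folded a_def b_def]
  have ab: "1 \<le> a" "a < b"
    using geom unfolding a_def b_def by (simp_all add: g_ge_1)
  have qb: "18/100 \<le> q b"
    unfolding b_def by (rule coarse_test_passed[OF coarse])
  moreover have qa: "18/100 \<le> q a"
    using qb sale_prob_antimono[of a b] ab by simp
  ultimately have Sc': "finite (Sc \<union> {a, b})" "\<forall>y\<in>Sc \<union> {a, b}. 18/100 \<le> q y \<and> 1 \<le> y"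
    using inv ab unfolding search_invariant_def by auto
  let ?good = "\<exists>y\<in>Sc \<union> {a, b}. (1 - 49/10 * \<epsilon>) * Rev M popt \<le> Rev M y"
  have bracket: "g i \<le> popt" "popt < (1 + \<epsilon>) * g j" if "\<not> ?good"
    using inv that unfolding search_invariant_def by auto
  show "search_invariant (probe 0.2 i j) j (Sc \<union> {a, b})"
    if "(1 + \<epsilon>) * (a * xa) < (1 - \<epsilon>) * (b * xb)"
  proof -
    have "a \<le> popt"
      using popt_ge_of_move_right[OF eps_pos eps_le ab qb xa[folded a_def] xb[folded b_def] that] .
    then show ?thesis
      using bracket qa Sc' unfolding search_invariant_def a_def by auto
  qed
  show "search_invariant i (probe 0.5 i j) (Sc \<union> {a, b})"
    if "\<not> (1 + \<epsilon>) * (a * xa) < (1 - \<epsilon>) * (b * xb)"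
  proof (cases "?good \<or> popt < (1 + \<epsilon>) * b")
    case True
    then show ?thesis
      using inv Sc' bracket unfolding search_invariant_def b_def by auto
  next
    case False
    have "b < (1 + \<epsilon>) * b"
      using ab eps_pos by simp
    then have "b < popt"
      using False by linarith
    moreover have "popt - b \<le> (1/2 + 1/19 + \<epsilon>) * (g j - g i)"
      using geom(6) bracket False by linarith
    moreover have "0 < g j - g i"
      using ij by simp
    moreover have "(1 - \<epsilon>) * (b * xb) \<le> (1 + \<epsilon>) * (a * xa)"
      using that by simp
    ultimately have "(1 - 49/10 * \<epsilon>) * Rev M popt \<le> Rev M b"
      using Rev_ge_of_move_left[OF eps_pos eps_le ab _ _ _ geom(7) qa qb xa[folded a_def] xb[folded b_def]]
      by blast
    then show ?thesis
      using False by blast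
  qed
qed

lemma loop_step_success:
  assumes ij: "i + 19 \<le> j" and inv: "search_invariant i j Sc" and "0 \<le> \<beta>"
    and next_round: "\<And>i' j' Sc' Q'. i' \<le> j' \<Longrightarrow> Suc j' - i' < Suc j - i \<Longrightarrow> search_invariant i' j' Sc' \<Longrightarrow>
      potential i' j' \<le> potential i j - 1 \<Longrightarrow>
      1 - \<beta> \<le> measure_pmf.prob (loop fuel (g ` {i'..j'}, Sc', Q')) good_outcomes"
  shows "1 - 3 * \<rho> - \<beta> \<le> measure_pmf.prob (loop (Suc fuel) (g ` {i..j}, Sc, Q)) good_outcomes"
  unfolding loop_step[OF ij]
proof (rule prob_test_then_compare_ge[OF coarse_accuracy fine_accuracy fine_accuracy \<open>0 \<le> \<beta>\<close>])
  note step = probe_step[OF ij]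
  fix k assume "\<bar>real k / real n1 - q (g (probe 0.5 i j))\<bar> \<le> 1/12" "real k / real n1 < 0.75 * exp (- 1)"
  then have "search_invariant i (probe 0.5 i j) Sc"
    by (rule search_invariant_move_low[OF inv])
  then show "1 - \<beta> \<le> measure_pmf.prob (loop fuel (g ` {i..probe 0.5 i j}, Sc, Q + n1)) good_outcomes"
    using step by (intro next_round) auto
next
  note step = probe_step[OF ij]
  fix k ka kb
  assume coarse: "\<bar>real k / real n1 - q (g (probe 0.5 i j))\<bar> \<le> 1/12" "\<not> real k / real n1 < 0.75 * exp (- 1)"
    and fine: "\<bar>real ka / real n2 - q (g (probe 0.2 i j))\<bar> \<le> \<epsilon> / 1000"
      "\<bar>real kb / real n2 - q (g (probe 0.5 i j))\<bar> \<le> \<epsilon> / 1000"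
  note invs = search_invariant_compare[OF ij inv coarse fine]
  let ?Sc' = "Sc \<union> {g (probe 0.2 i j), g (probe 0.5 i j)}" and ?Q' = "Q + n1 + 2 * n2"
  show "1 - \<beta> \<le> measure_pmf.prob (loop fuel
      (if (1 + \<epsilon>) * (g (probe 0.2 i j) * (real ka / real n2)) < (1 - \<epsilon>) * (g (probe 0.5 i j) * (real kb / real n2))
       then g ` {probe 0.2 i j..j} else g ` {i..probe 0.5 i j}, ?Sc', ?Q')) good_outcomes"
  proof (cases "(1 + \<epsilon>) * (g (probe 0.2 i j) * (real ka / real n2)) < (1 - \<epsilon>) * (g (probe 0.5 i j) * (real kb / real n2))")
    case True
    have "1 - \<beta> \<le> measure_pmf.prob (loop fuel (g ` {probe 0.2 i j..j}, ?Sc', ?Q')) good_outcomes"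
      by (rule next_round) (use invs(1)[OF True] step in auto)
    then show ?thesis
      using True by simp
  next
    case False
    have "1 - \<beta> \<le> measure_pmf.prob (loop fuel (g ` {i..probe 0.5 i j}, ?Sc', ?Q')) good_outcomes"
      by (rule next_round) (use invs(2)[OF False] step in auto)
    then show ?thesis
      using False by simp
  qed
qed

lemma loop_success_prob:
  "i \<le> j \<Longrightarrow> Suc j - i \<le> fuel \<Longrightarrow> search_invariant i j Sc \<Longrightarrow>
   1 - 3 * \<rho> * potential i j \<le> measure_pmf.prob (loop fuel (g ` {i..j}, Sc, Q)) good_outcomes"
proof (induction fuel arbitrary: i j Sc Q)
  case (Suc fuel)
  show ?case
  proof (cases "Suc j - i < 20")
    case True
    then have "(g ` {i..j}, Sc, Q) \<in> good_outcomes"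
      unfolding good_outcomes_def using Suc.prems by auto
    then show ?thesis
      using True loop_small rho_nonneg potential_nonneg[of i j] by simp
  next
    case False
    then have ij: "i + 19 \<le> j"
      by simp
    have "1 - 3 * \<rho> - 3 * \<rho> * (potential i j - 1)
        \<le> measure_pmf.prob (loop (Suc fuel) (g ` {i..j}, Sc, Q)) good_outcomes"
    proof (rule loop_step_success[OF ij Suc.prems(3)])
      show "0 \<le> 3 * \<rho> * (potential i j - 1)"
        using potential_ge_1[OF ij] rho_nonneg by simp
      fix i' j' Sc' Q'
      assume "i' \<le> j'" "Suc j' - i' < Suc j - i" "search_invariant i' j' Sc'"
        and "potential i' j' \<le> potential i j - 1"
      moreover from this have "3 * \<rho> * potential i' j' \<le> 3 * \<rho> * (potential i j - 1)"
        using rho_nonneg by (intro mult_left_mono) auto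
      ultimately show "1 - 3 * \<rho> * (potential i j - 1)
          \<le> measure_pmf.prob (loop fuel (g ` {i'..j'}, Sc', Q')) good_outcomes"
        using Suc.IH[of i' j' Sc' Q'] Suc.prems(2) by linarith
    qed
    then show ?thesis
      by (simp add: algebra_simps)
  qed
qed simp

section \<open>The final selection\<close>

lemma good_outcome_candidate:
  assumes "(S, Sc, Q) \<in> good_outcomes"
  obtains y where "y \<in> Sc \<union> S" "(1 - 49/10 * \<epsilon>) * Rev M popt \<le> Rev M y"
proof -
  obtain i j where S: "S = g ` {i..j}" and inv: "search_invariant i j Sc"
    using assms unfolding good_outcomes_def by auto
  show ?thesis
  proof (cases "\<exists>y\<in>Sc. (1 - 49/10 * \<epsilon>) * Rev M popt \<le> Rev M y")
    case False
    then have "g i \<le> popt" "popt < (1 + \<epsilon>) * g j"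
      using inv unfolding search_invariant_def by auto
    then obtain k where k: "i \<le> k" "k \<le> j" "g k \<le> popt" "popt < (1 + \<epsilon>) * g k"
      by (rule exists_g_bracket)
    then have "(1 - \<epsilon>) * Rev M popt \<le> Rev M (g k)"
      using eps_pos eps_le g_ge_1 by (intro Rev_ge_of_bracket) auto
    moreover have "(1 - 49/10 * \<epsilon>) * Rev M popt \<le> (1 - \<epsilon>) * Rev M popt"
      using Rev_opt_ge_1 eps_pos by (intro mult_right_mono) auto
    ultimately show ?thesis
      using that k S by force
  qed (use that in blast)
qed

lemma good_outcome_prices_bounded:
  assumes "(S, Sc, Q) \<in> good_outcomes" "y \<in> Sc \<union> S"
  shows "1 \<le> y" "y \<le> 35 * Rev M popt"
proof -
  obtain i j where S: "S = g ` {i..j}" "Suc j - i < 20" and inv: "search_invariant i j Sc"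
    using assms(1) unfolding good_outcomes_def by auto
  have below: "p \<le> Rev M popt / (18/100)" if "18/100 \<le> q p" "1 \<le> p" for p
  proof -
    have "p * (18/100) \<le> p * q p"
      using that by (intro mult_left_mono) auto
    also have "\<dots> \<le> Rev M popt"
      using Rev_le_opt[of p] by (simp add: Rev_eq)
    finally show ?thesis
      by (simp add: field_simps)
  qed
  consider "y \<in> Sc" | k where "k \<in> {i..j}" "y = g k"
    using assms(2) S by auto
  then have "1 \<le> y \<and> y \<le> 35 * Rev M popt"
  proof cases
    case 1
    then show ?thesis
      using inv below Rev_opt_ge_1 unfolding search_invariant_def by force
  next
    case 2
    then have "k \<le> i + 18"
      using S(2) by auto
    then have "y \<le> g (i + 18)"
      using 2 by simp
    also have "\<dots> \<le> (Rev M popt / (18/100)) * (56/10)"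
      using below[of "g i"] inv g_ge_1 one_plus_eps_pow_18 Rev_opt_ge_1 unfolding g_add search_invariant_def
      by (intro mult_mono) auto
    also have "\<dots> \<le> 35 * Rev M popt"
      using Rev_opt_ge_1 by simp
    finally show ?thesis
      using 2 g_ge_1 by simp
  qed
  then show "1 \<le> y" "y \<le> 35 * Rev M popt"
    by simp_all
qed

lemma good_outcome_finite: "(S, Sc, Q) \<in> good_outcomes \<Longrightarrow> finite (Sc \<union> S)"
  unfolding good_outcomes_def search_invariant_def by auto

lemma pick_argmax_near_optimal:
  assumes good: "(S, Sc, Q) \<in> good_outcomes"
    and L: "accurate_estimates q (\<epsilon> / 1000) (sorted_list_of_set (Sc \<union> S)) L"
  shows "(1 - 5 * \<epsilon>) * Rev M popt \<le> Rev M (pick_argmax L)"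
proof -
  obtain y0 where y0: "y0 \<in> Sc \<union> S" "(1 - 49/10 * \<epsilon>) * Rev M popt \<le> Rev M y0"
    using good_outcome_candidate[OF good] .
  have fin: "finite (Sc \<union> S)"
    by (rule good_outcome_finite[OF good])
  have "y0 * q y0 - 2 * (35 * Rev M popt) * (\<epsilon> / 1000) \<le> pick_argmax L * q (pick_argmax L)"
  proof (rule pick_argmax_accurate[OF L])
    fix y assume "y \<in> set (sorted_list_of_set (Sc \<union> S))"
    then have "y \<in> Sc \<union> S"
      using fin by simp
    then show "0 \<le> y \<and> y \<le> 35 * Rev M popt"
      using good_outcome_prices_bounded[OF good] by fastforce
  qed (use y0 fin eps_pos in auto)
  then have "Rev M y0 - 2 * (35 * Rev M popt) * (\<epsilon> / 1000) \<le> Rev M (pick_argmax L)"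
    unfolding Rev_eq[of y0] Rev_eq[of "pick_argmax L"] .
  moreover have "0 \<le> \<epsilon> * Rev M popt"
    using eps_pos Rev_opt_ge_1 by simp
  ultimately show ?thesis
    using y0(2) by (simp add: algebra_simps)
qed

lemma within_budget_candidates:
  assumes "within_budget i j Sc\<^sub>0 Q\<^sub>0 (S, Sc, Q)"
  shows "finite (Sc \<union> S)" "real (card (Sc \<union> S)) \<le> real (card Sc\<^sub>0) + 2 * potential i j + 19"
    "real Q \<le> real Q\<^sub>0 + real (n1 + 2 * n2) * potential i j"
proof -
  obtain i' j' where S: "S = g ` {i'..j'}" "Suc j' - i' < 20"
    using assms unfolding within_budget_def by auto
  then have "card S \<le> 19"
    by (simp add: card_g_image)
  moreover have "card (Sc \<union> S) \<le> card Sc + card S"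
    by (rule card_Un_le)
  ultimately show "finite (Sc \<union> S)" "real (card (Sc \<union> S)) \<le> real (card Sc\<^sub>0) + 2 * potential i j + 19"
    "real Q \<le> real Q\<^sub>0 + real (n1 + 2 * n2) * potential i j"
    using assms S unfolding within_budget_def by auto
qed

definition run :: "nat \<Rightarrow> (real \<times> nat) pmf" where
  "run N = loop (Suc N) (g ` {0..N}, {}, 0) \<bind> (\<lambda>(S, Sc, Q).
     let Sc' = Sc \<union> S in
     est_list q n2 (sorted_list_of_set Sc') \<bind> (\<lambda>L. return_pmf (pick_argmax L, Q + n2 * card Sc')))"

lemma run_within_budget:
  "x \<in> set_pmf (loop (Suc N) (g ` {0..N}, {}, 0)) \<Longrightarrow> within_budget 0 N {} 0 x"
  by (rule loop_within_budget) auto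

lemma final_stage_success:
  assumes good: "(S, Sc, Q) \<in> good_outcomes" and card: "real (card (Sc \<union> S)) \<le> B"
  shows "1 - B * \<rho> \<le> measure_pmf.prob
    (est_list q n2 (sorted_list_of_set (Sc \<union> S)) \<bind> (\<lambda>L. return_pmf (pick_argmax L, Q + n2 * card (Sc \<union> S))))
    {x. (1 - 5 * \<epsilon>) * Rev M popt \<le> Rev M (fst x)}"
proof -
  define ps where "ps = sorted_list_of_set (Sc \<union> S)"
  have "real (length ps) * \<rho> \<le> B * \<rho>"
    using card rho_nonneg unfolding ps_def by (intro mult_right_mono) auto
  moreover have "1 - real (length ps) * \<rho> - 0 \<le> measure_pmf.prob
      (est_list q n2 ps \<bind> (\<lambda>L. return_pmf (pick_argmax L, Q + n2 * card (Sc \<union> S))))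
      {x. (1 - 5 * \<epsilon>) * Rev M popt \<le> Rev M (fst x)}"
  proof (rule prob_bind_pmf_ge[OF est_list_accurate[OF fine_accuracy]])
    fix L assume "accurate_estimates q (\<epsilon> / 1000) ps L"
    then show "1 - 0 \<le> measure_pmf.prob (return_pmf (pick_argmax L, Q + n2 * card (Sc \<union> S)))
        {x. (1 - 5 * \<epsilon>) * Rev M popt \<le> Rev M (fst x)}"
      using pick_argmax_near_optimal[OF good] unfolding ps_def by (intro prob_return_pmf_ge) simp
  qed simp
  ultimately show ?thesis
    unfolding ps_def by simp
qed

lemma run_success:
  assumes "popt < (1 + \<epsilon>) * g N"
  shows "1 - \<rho> * (5 * potential 0 N + 19)
    \<le> measure_pmf.prob (run N) {x. (1 - 5 * \<epsilon>) * Rev M popt \<le> Rev M (fst x)}"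
proof -
  define P where "P = potential 0 N"
  have "search_invariant 0 N {}"
    using assms popt_ge_1 sale_prob_1 unfolding search_invariant_def g_def by simp
  then have "1 - 3 * \<rho> * P \<le> measure_pmf.prob (loop (Suc N) (g ` {0..N}, {}, 0)) {x. x \<in> good_outcomes}"
    unfolding P_def by (simp add: loop_success_prob)
  then have "1 - 3 * \<rho> * P - (2 * P + 19) * \<rho>
      \<le> measure_pmf.prob (run N) {x. (1 - 5 * \<epsilon>) * Rev M popt \<le> Rev M (fst x)}"
    unfolding run_def
  proof (rule prob_bind_pmf_ge)
    show "0 \<le> (2 * P + 19) * \<rho>"
      unfolding P_def using potential_nonneg rho_nonneg by simp
    fix x assume x: "x \<in> set_pmf (loop (Suc N) (g ` {0..N}, {}, 0))" "x \<in> good_outcomes"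
    obtain S Sc Q where x_eq: "x = (S, Sc, Q)"
      by (cases x)
    have "real (card (Sc \<union> S)) \<le> 2 * P + 19"
      using within_budget_candidates[OF run_within_budget[OF x(1)[unfolded x_eq]]]
      unfolding P_def by simp
    then show "1 - (2 * P + 19) * \<rho> \<le> measure_pmf.prob ((\<lambda>(S, Sc, Q).
        let Sc' = Sc \<union> S in
        est_list q n2 (sorted_list_of_set Sc') \<bind> (\<lambda>L. return_pmf (pick_argmax L, Q + n2 * card Sc'))) x)
        {x. (1 - 5 * \<epsilon>) * Rev M popt \<le> Rev M (fst x)}"
      using final_stage_success x(2) unfolding x_eq Let_def by simp
  qed
  then show ?thesis
    unfolding P_def by (simp add: algebra_simps)
qed

lemma run_queries:
  assumes "x \<in> set_pmf (run N)"
  shows "real (snd x) \<le> real (n1 + 2 * n2) * potential 0 N + real n2 * (2 * potential 0 N + 19)"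
proof -
  obtain S Sc Q where SQ: "(S, Sc, Q) \<in> set_pmf (loop (Suc N) (g ` {0..N}, {}, 0))"
    and x: "snd x = Q + n2 * card (Sc \<union> S)"
    using assms unfolding run_def by (auto simp: Let_def)
  note budget = within_budget_candidates[OF run_within_budget[OF SQ]]
  have "real n2 * real (card (Sc \<union> S)) \<le> real n2 * (2 * potential 0 N + 19)"
    using budget(2) by (intro mult_left_mono) auto
  then show ?thesis
    using budget(3) x by simp
qed

end

section \<open>Choice of the parameters\<close>

lemma ln_ge_2: "10 \<le> x \<Longrightarrow> 2 \<le> ln (x :: real)"
proof -
  assume "10 \<le> x"
  have "exp (1 :: real) * exp 1 \<le> 272/100 * (272/100)"
    using e_less_272 by (intro mult_mono) auto
  then have "exp (2 :: real) \<le> x"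
    using \<open>10 \<le> x\<close> by (simp add: exp_add[symmetric])
  then show ?thesis
    using \<open>10 \<le> x\<close> by (subst ln_ge_iff) auto
qed

lemma ln_132_le: "ln (132 :: real) \<le> 8"
proof -
  have "(2 :: real) ^ 8 \<le> exp 1 ^ 8"
    using exp_ge_add_one_self[of 1] by (intro power_mono) auto
  then have "132 \<le> exp (8 :: real)"
    by (simp add: exp_of_nat_mult[symmetric])
  then have "ln 132 \<le> ln (exp (8 :: real))"
    by (subst ln_le_cancel_iff) auto
  then show ?thesis
    by simp
qed

lemma Rtilde_bounds:
  assumes H: "1 \<le> H" and e: "0 < \<epsilon>" "\<epsilon> \<le> 1/10"
  defines "L \<equiv> ln (H / \<epsilon>)"
  shows "2 \<le> L" "132 \<le> Rtilde 1 H \<epsilon>" "ln (Rtilde 1 H \<epsilon>) \<le> 6 * L" "74 * L \<le> Rtilde 1 H \<epsilon> ^ 3"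
proof -
  define a where "a = ln H"
  define c where "c = ln (1 / \<epsilon>)"
  have a: "0 \<le> a"
    unfolding a_def using H by simp
  have c: "2 \<le> c"
    unfolding c_def using e by (intro ln_ge_2) (simp add: field_simps)
  have L: "L = a + c"
    unfolding L_def a_def c_def using H e by (simp add: ln_div)
  have R: "Rtilde 1 H \<epsilon> = 22 * a\<^sup>2 + 44 * (a * c) + 66 * c"
    unfolding Rtilde_def a_def c_def by simp
  have ac: "0 \<le> a * c" "0 \<le> a\<^sup>2"
    using a c by simp_all
  show "2 \<le> L"
    using a c L by simp
  show R132: "132 \<le> Rtilde 1 H \<epsilon>"
    using R ac c by linarith
  have "a\<^sup>2 \<le> L\<^sup>2" "a * c \<le> L * L" "c \<le> L * L"
    using a c L by (auto simp: power2_eq_square intro: mult_mono order.trans[of c "L * 1"])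
  then have "Rtilde 1 H \<epsilon> \<le> 132 * L\<^sup>2"
    using R by (simp add: power2_eq_square)
  then have "ln (Rtilde 1 H \<epsilon>) \<le> ln (132 * L\<^sup>2)"
    using R132 by (subst ln_le_cancel_iff) auto
  also have "\<dots> = ln 132 + 2 * ln L"
    using a c L by (simp add: ln_mult ln_realpow)
  also have "\<dots> \<le> 6 * L"
    using ln_132_le ln_le_minus_one[of L] a c L by simp
  finally show "ln (Rtilde 1 H \<epsilon>) \<le> 6 * L" .
  have "a \<le> a\<^sup>2 + 1/4"
    using zero_le_power2[of "a - 1/2"] by (simp add: power2_eq_square algebra_simps)
  then have "74 * L \<le> 132 * 132 * Rtilde 1 H \<epsilon>"
    using R L ac c by linarith
  also have "\<dots> \<le> Rtilde 1 H \<epsilon> * Rtilde 1 H \<epsilon> * Rtilde 1 H \<epsilon>"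
    using R132 by (intro mult_right_mono mult_mono) auto
  finally show "74 * L \<le> Rtilde 1 H \<epsilon> ^ 3"
    by (simp add: power3_eq_cube)
qed

lemma sample_size_bounds:
  fixes x \<epsilon> :: real
  assumes "0 \<le> x" "0 < \<epsilon>" "\<epsilon> \<le> 1"
  defines "n1 \<equiv> nat \<lceil>x / exp (- 1)\<rceil>" and "n2 \<equiv> nat \<lceil>x / (exp (- 1) * \<epsilon>\<^sup>2)\<rceil>"
  shows "x \<le> real n1" "x \<le> real n2 * \<epsilon>\<^sup>2" "n1 \<le> n2" "real n2 \<le> 3 * x / \<epsilon>\<^sup>2 + 1"
proof -
  have e2: "0 < \<epsilon>\<^sup>2" "\<epsilon>\<^sup>2 \<le> 1"
    using assms by (simp_all add: power_le_one)
  have em: "1/3 < exp (- 1 :: real)" "exp (- 1 :: real) \<le> 1"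
    using exp_minus_one_bounds by auto
  have "x * exp (- 1) \<le> x"
    using assms em(2) by (intro mult_left_le) auto
  then have x: "x \<le> x / exp (- 1)"
    by (simp add: field_simps)
  then show "x \<le> real n1"
    unfolding n1_def using real_nat_ceiling_ge order.trans by blast
  have "x / exp (- 1) \<le> x / (exp (- 1) * \<epsilon>\<^sup>2)"
    using assms e2 em by (simp add: field_simps mult_left_le)
  then show "n1 \<le> n2"
    unfolding n1_def n2_def by (intro nat_mono ceiling_mono)
  have "x \<le> x / (exp (- 1) * \<epsilon>\<^sup>2) * \<epsilon>\<^sup>2"
    using x e2 by simp
  also have "\<dots> \<le> real n2 * \<epsilon>\<^sup>2"
    unfolding n2_def using e2 by (intro mult_right_mono real_nat_ceiling_ge) auto
  finally show "x \<le> real n2 * \<epsilon>\<^sup>2" .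
  have "x / (exp (- 1) * \<epsilon>\<^sup>2) = (x / \<epsilon>\<^sup>2) / exp (- 1)"
    by simp
  also have "\<dots> \<le> (x / \<epsilon>\<^sup>2) / (1/3)"
    using assms e2 em by (intro divide_left_mono) auto
  finally have "x / (exp (- 1) * \<epsilon>\<^sup>2) \<le> 3 * x / \<epsilon>\<^sup>2"
    by (simp add: mult.commute)
  moreover have "real n2 \<le> x / (exp (- 1) * \<epsilon>\<^sup>2) + 1"
    unfolding n2_def using assms e2 em by simp
  ultimately show "real n2 \<le> 3 * x / \<epsilon>\<^sup>2 + 1"
    by linarith
qed

lemma binomial_sample_accuracy:
  assumes "0 \<le> p" "p \<le> 1" "0 < t" "0 < L" "3 * L \<le> 2 * real n * t\<^sup>2"
  shows "1 - 2 * exp (- 3 * L) \<le> measure_pmf.prob (binomial_pmf n p) {k. \<bar>real k / real n - p\<bar> \<le> t}"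
proof -
  have "0 < n"
    using assms by (cases n) auto
  then have "1 - 2 * exp (- 2 * real n * t\<^sup>2) \<le> measure_pmf.prob (binomial_pmf n p) {k. \<bar>real k / real n - p\<bar> \<le> t}"
    using assms by (intro binomial_pmf_concentration) auto
  moreover have "exp (- 2 * real n * t\<^sup>2) \<le> exp (- 3 * L)"
    using assms by simp
  ultimately show ?thesis
    by linarith
qed

lemma sample_sizes_accurate:
  fixes C Lr \<epsilon> p :: real
  assumes "2000000 \<le> C" "2 \<le> Lr" "0 < \<epsilon>" "\<epsilon> \<le> 1" "0 \<le> p" "p \<le> 1"
  defines "n1 \<equiv> nat \<lceil>C * Lr / exp (- 1)\<rceil>" and "n2 \<equiv> nat \<lceil>C * Lr / (exp (- 1) * \<epsilon>\<^sup>2)\<rceil>"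
  shows "1 - 2 * exp (- 3 * Lr) \<le> measure_pmf.prob (binomial_pmf n1 p) {k. \<bar>real k / real n1 - p\<bar> \<le> 1/12}"
    and "1 - 2 * exp (- 3 * Lr) \<le> measure_pmf.prob (binomial_pmf n2 p) {k. \<bar>real k / real n2 - p\<bar> \<le> \<epsilon> / 1000}"
proof -
  have "0 \<le> C * Lr"
    using assms by simp
  note sizes = sample_size_bounds[OF this assms(3,4), folded n1_def n2_def]
  have "216 * Lr \<le> C * Lr"
    using assms by (intro mult_right_mono) auto
  moreover have "2 * real n1 * (1/12)\<^sup>2 = real n1 / 72"
    by (simp add: power2_eq_square)
  ultimately have "3 * Lr \<le> 2 * real n1 * (1/12)\<^sup>2"
    using sizes(1) by linarith
  then show "1 - 2 * exp (- 3 * Lr) \<le> measure_pmf.prob (binomial_pmf n1 p) {k. \<bar>real k / real n1 - p\<bar> \<le> 1/12}"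
    using assms by (intro binomial_sample_accuracy) auto
  have "1500000 * Lr \<le> C * Lr"
    using assms by (intro mult_right_mono) auto
  moreover have "2 * real n2 * (\<epsilon> / 1000)\<^sup>2 = 2 * (real n2 * \<epsilon>\<^sup>2) / 1000000"
    by (simp add: power_divide)
  ultimately have "3 * Lr \<le> 2 * real n2 * (\<epsilon> / 1000)\<^sup>2"
    using sizes(2) by linarith
  then show "1 - 2 * exp (- 3 * Lr) \<le> measure_pmf.prob (binomial_pmf n2 p) {k. \<bar>real k / real n2 - p\<bar> \<le> \<epsilon> / 1000}"
    using assms by (intro binomial_sample_accuracy) auto
qed

lemma ln_Rtilde_div_bounds:
  assumes H: "1 \<le> H" and e: "0 < \<epsilon>" "\<epsilon> \<le> 1/10" and d: "0 < \<delta>" "\<delta> \<le> 1"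
  defines "Lr \<equiv> ln (Rtilde 1 H \<epsilon> / \<delta>)"
  shows "2 \<le> Lr" "Lr \<le> 6 * ln (H / \<epsilon>) * (1 + ln (1 / \<delta>))"
    "2 * exp (- 3 * Lr) = 2 * (\<delta> / Rtilde 1 H \<epsilon>) ^ 3"
proof -
  note R = Rtilde_bounds[OF H e]
  have Lr: "Lr = ln (Rtilde 1 H \<epsilon>) + ln (1 / \<delta>)"
    unfolding Lr_def using R d by (simp add: ln_div)
  have ld: "0 \<le> ln (1 / \<delta>)"
    using d by simp
  then show "2 \<le> Lr"
    using Lr R ln_ge_2[of "Rtilde 1 H \<epsilon>"] by simp
  have "1 * ln (1 / \<delta>) \<le> (6 * ln (H / \<epsilon>)) * ln (1 / \<delta>)"
    using R ld by (intro mult_right_mono) auto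
  then show "Lr \<le> 6 * ln (H / \<epsilon>) * (1 + ln (1 / \<delta>))"
    using Lr R by (simp add: algebra_simps)
  have "exp (3 * Lr) = exp Lr ^ 3"
    using exp_of_nat_mult[of 3 Lr] by simp
  also have "exp Lr = Rtilde 1 H \<epsilon> / \<delta>"
    unfolding Lr_def using R d by simp
  finally show "2 * exp (- 3 * Lr) = 2 * (\<delta> / Rtilde 1 H \<epsilon>) ^ 3"
    by (simp add: exp_minus power_divide)
qed

lemma failure_probability_le:
  fixes \<delta> R L P :: real
  assumes d: "0 < \<delta>" "\<delta> \<le> 1" and R: "132 \<le> R" "74 * L \<le> R ^ 3" and L: "2 \<le> L"
    and P: "0 \<le> P" "P \<le> 1 + 5 * L"
  shows "2 * (\<delta> / R) ^ 3 * (5 * P + 19) \<le> \<delta>"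
proof -
  have "\<delta> ^ 3 \<le> \<delta> ^ 1"
    using d by (intro power_decreasing) auto
  have "2 * (\<delta> / R) ^ 3 * (5 * P + 19) \<le> 2 * (\<delta> / R) ^ 3 * (37 * L)"
    using P L d R by (intro mult_left_mono) auto
  also have "\<dots> = \<delta> ^ 3 * (74 * L) / R ^ 3"
    by (simp add: power_divide)
  also have "\<dots> \<le> \<delta> ^ 3"
    using R d by (simp add: field_simps mult_left_le)
  finally show ?thesis
    using \<open>\<delta> ^ 3 \<le> \<delta> ^ 1\<close> by simp
qed

lemma query_count_le:
  fixes C \<epsilon> L Lr ld P :: real and n1 n2 :: nat
  assumes C: "0 \<le> C" and e: "0 < \<epsilon>" "\<epsilon> \<le> 1" and L: "2 \<le> L" and ld: "0 \<le> ld"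
    and P: "0 \<le> P" "P \<le> 1 + 5 * L" and n: "n1 \<le> n2" "real n2 \<le> 3 * (C * Lr) / \<epsilon>\<^sup>2 + 1"
    and Lr: "Lr \<le> 6 * L * (1 + ld)"
  shows "real (n1 + 2 * n2) * P + real n2 * (2 * P + 19) \<le> 1000 * (C + 1) * (1 / \<epsilon>\<^sup>2) * L ^ 4 * (1 + ld)"
proof -
  have e2: "0 < \<epsilon>\<^sup>2" "\<epsilon>\<^sup>2 \<le> 1"
    using e by (simp_all add: power_le_one)
  have "0 \<le> L * ld"
    using L ld by simp
  then have "\<epsilon>\<^sup>2 \<le> L * (1 + ld)"
    using L e2 by (simp add: algebra_simps)
  then have "1 \<le> L * (1 + ld) / \<epsilon>\<^sup>2"
    using e2 by simp
  moreover have "C * Lr \<le> C * (6 * L * (1 + ld))"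
    using Lr C by (intro mult_left_mono)
  then have "3 * (C * Lr) / \<epsilon>\<^sup>2 \<le> 18 * C * (L * (1 + ld)) / \<epsilon>\<^sup>2"
    using e2 by (intro divide_right_mono) auto
  ultimately have n2: "real n2 \<le> (18 * C + 1) * (L * (1 + ld)) / \<epsilon>\<^sup>2"
    using n(2) by (simp add: add_divide_distrib distrib_right)
  have "real (n1 + 2 * n2) * P + real n2 * (2 * P + 19) \<le> real n2 * (5 * P + 19)"
    using mult_right_mono[of "real n1" "real n2" P] n(1) P by (simp add: algebra_simps)
  also have "\<dots> \<le> (18 * C + 1) * (L * (1 + ld)) / \<epsilon>\<^sup>2 * (37 * L)"
    using n2 P L by (intro mult_mono) auto
  also have "\<dots> = 37 * (18 * C + 1) * (1 / \<epsilon>\<^sup>2) * L\<^sup>2 * (1 + ld)"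
    by (simp add: power2_eq_square field_simps)
  also have "\<dots> \<le> 1000 * (C + 1) * (1 / \<epsilon>\<^sup>2) * L ^ 4 * (1 + ld)"
  proof -
    have "37 * (18 * C + 1) * (1 / \<epsilon>\<^sup>2) \<le> 1000 * (C + 1) * (1 / \<epsilon>\<^sup>2)"
      using C e2 by (intro mult_right_mono) auto
    moreover have "L\<^sup>2 \<le> L ^ 4"
      using L by (intro power_increasing) auto
    ultimately have "37 * (18 * C + 1) * (1 / \<epsilon>\<^sup>2) * L\<^sup>2 \<le> 1000 * (C + 1) * (1 / \<epsilon>\<^sup>2) * L ^ 4"
      by (rule mult_mono) (use C in auto)
    then show ?thesis
      using ld by (intro mult_right_mono) auto
  qed
  finally show ?thesis .
qed

lemma AlgU_guarantee:
  fixes H \<epsilon> \<delta> C :: real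
  assumes C: "2000000 \<le> C" and H: "H \<ge> 1" and e: "0 < \<epsilon>" "\<epsilon> \<le> 0.1" and d: "0 < \<delta>" "\<delta> \<le> 1"
    and MHR: "MHR_on M f H" and opt: "\<forall>p. Rev M p \<le> Rev M popt"
  defines "D \<equiv> AlgU (sale_prob M) 1 H \<delta> \<epsilon> (exp (- 1)) C"
  shows "1 - \<delta> \<le> measure_pmf.prob D {x. (1 - 5 * \<epsilon>) * Rev M popt \<le> Rev M (fst x)}"
    and "x \<in> set_pmf D \<Longrightarrow>
      real (snd x) \<le> 1000 * (C + 1) * (1 / \<epsilon>\<^sup>2) * (ln (H / \<epsilon>)) ^ 4 * (1 + ln (1 / \<delta>))"
proof -
  have e': "\<epsilon> \<le> 1/10" "\<epsilon> \<le> 1"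
    using e by simp_all
  define Rt where "Rt = Rtilde 1 H \<epsilon>"
  define Lr where "Lr = ln (Rt / \<delta>)"
  define n1 where "n1 = nat \<lceil>C * Lr / exp (- 1)\<rceil>"
  define n2 where "n2 = nat \<lceil>C * Lr / (exp (- 1) * \<epsilon>\<^sup>2)\<rceil>"
  note R = Rtilde_bounds[OF H e(1) e'(1), folded Rt_def]
  note Lr = ln_Rtilde_div_bounds[OF H e(1) e'(1) d, folded Rt_def Lr_def]
  interpret mhr_optimum M f H popt
    using MHR opt by unfold_locales auto
  interpret algorithm_U M f H popt \<epsilon> n1 n2 "2 * (\<delta> / Rt) ^ 3"
    using sample_sizes_accurate[OF C Lr(1) e(1) e'(2) sale_prob_nonneg sale_prob_le_1, folded n1_def n2_def]
      e e'(1) Lr(3) by unfold_locales auto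
  obtain N where grid: "grid 1 H \<epsilon> = g ` {0..N}" and N: "g N \<le> H" "H < g (Suc N)"
    using grid_eq_g_image[OF H] .
  have D: "D = run N"
    unfolding run_def loop_def
    unfolding D_def AlgU_def Let_def grid card_g_image diff_zero n1_def n2_def Lr_def Rt_def ..
  have P: "0 \<le> potential 0 N" "potential 0 N \<le> 1 + 5 * ln (H / \<epsilon>)"
    using potential_nonneg potential_0_le[OF N(1)] by auto
  have "popt < (1 + \<epsilon>) * g N"
    using popt_less_H N(2) g_Suc by simp
  then show "1 - \<delta> \<le> measure_pmf.prob D {x. (1 - 5 * \<epsilon>) * Rev M popt \<le> Rev M (fst x)}"
    using run_success failure_probability_le[OF d R(2,4,1) P] unfolding D by fastforce
  assume "x \<in> set_pmf D"
  moreover have "real (n1 + 2 * n2) * potential 0 N + real n2 * (2 * potential 0 N + 19)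
      \<le> 1000 * (C + 1) * (1 / \<epsilon>\<^sup>2) * (ln (H / \<epsilon>)) ^ 4 * (1 + ln (1 / \<delta>))"
    using C e e'(2) R(1) P Lr d
      sample_size_bounds(3,4)[of "C * Lr" \<epsilon>, folded n1_def n2_def]
    by (intro query_count_le) (auto intro: mult_nonneg_nonneg)
  ultimately show "real (snd x) \<le> 1000 * (C + 1) * (1 / \<epsilon>\<^sup>2) * (ln (H / \<epsilon>)) ^ 4 * (1 + ln (1 / \<delta>))"
    using run_queries unfolding D by fastforce
qed

theorem theorem4p2:
  "\<exists>C0. \<forall>C \<ge> C0. \<exists>K. \<forall>(H::real) (\<epsilon>::real) (\<delta>::real) (M::real measure) f popt.
     H \<ge> 1 \<longrightarrow> 0 < \<epsilon> \<longrightarrow> \<epsilon> \<le> 0.1 \<longrightarrow> 0 < \<delta> \<longrightarrow> \<delta> \<le> 1 \<longrightarrow>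
     MHR_on M f H \<longrightarrow> (\<forall>p. Rev M p \<le> Rev M popt) \<longrightarrow>
     (let D = AlgU (sale_prob M) 1 H \<delta> \<epsilon> (exp (-1)) C in
        measure_pmf.prob D {x. Rev M (fst x) \<ge> (1 - 5 * \<epsilon>) * Rev M popt} \<ge> 1 - \<delta> \<and>
        (\<forall>x \<in> set_pmf D. real (snd x) \<le>
            K * (1 / \<epsilon>\<^sup>2) * (ln (H / \<epsilon>)) ^ 4 * (1 + ln (1 / \<delta>))))"
  unfolding Let_def using AlgU_guarantee by blast

end
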